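(* Let $a,b$ be nonnegative integers with $a\ge b$. If $n\ge a+b$, then $\{\Phi_0,\Phi_1,\dots,\Phi_b\}$ is a basis of the $K$-vector space $\operatorname{Hom}_G(\Lambda^a\otimes\Lambda^b,\Lambda^a\otimes\Lambda^b)$.
   Context: $K$ is a field of characteristic zero, $G=GL(n,K)$, $V=K^n$, $\Lambda=\bigoplus_i\Lambda^i$ the exterior algebra of $V$. $m$ is multiplication and $\Delta_{s,t}:\Lambda^{s+t}\to\Lambda^s\otimes\Lambda^t$ the comultiplication component $v_1\cdots v_{s+t}\mapsto\sum_\sigma\mathrm{sgn}(\sigma)v_{\sigma(1)}\cdots v_{\sigma(s)}\otimes v_{\sigma(s+1)}\cdots v_{\sigma(s+t)}$ (permutations increasing on the first $s$ and on the last $t$ positions). For $0\le t\le b$: $\delta_t=(m\otimes1)\circ(1\otimes\Delta_{t,b-t}):\Lambda^a\otimes\Lambda^b\to\Lambda^{a+t}\otimes\Lambda^{b-t}$, $\theta_t=(1\otimes m)\circ(\Delta_{a,t}\otimes1):\Lambda^{a+t}\otimes\Lambda^{b-t}\to\Lambda^{a}\otimes\Lambda^{b}$, and $\Phi_t=\theta_t\circ\delta_t$ (so $\Phi_0$ is the identity). *)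

theory Defs
  imports Main
begin

text \<open>Coordinates: V = K^n with standard basis e_0,...,e_{n-1}. The exterior power
Lambda^k has basis e_S (S a k-subset of {0..<n}, wedge of e_s in increasing order).
An element of Lambda^a (x) Lambda^b is a coefficient function on pairs (S,T);
the space W n a b consists of those supported on k-subsets.\<close>

type_synonym 'a tensor = "nat set \<times> nat set \<Rightarrow> 'a"

definition idx :: "nat \<Rightarrow> nat \<Rightarrow> nat set set" where
  "idx n k = {S. S \<subseteq> {..<n} \<and> card S = k}"

definition W :: "nat \<Rightarrow> nat \<Rightarrow> nat \<Rightarrow> ('a::zero) tensor set" where
  "W n a b = {f. \<forall>P. P \<notin> idx n a \<times> idx n b \<longrightarrow> f P = 0}"

text \<open>Sign of the shuffle sorting the concatenation (S in increasing order, then T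
in increasing order): e_S \<and> e_T = sgn2 S T e_{S \<union> T} for disjoint S, T.\<close>
definition sgn2 :: "nat set \<Rightarrow> nat set \<Rightarrow> 'a::comm_ring_1" where
  "sgn2 S T = (-1) ^ card {(s,t). s \<in> S \<and> t \<in> T \<and> t < s}"

text \<open>delta_t on basis vector e_A (x) e_B:
  sum over t-subsets C of B of sgn(C,B-C) (e_A \<and> e_C) (x) e_{B-C}.\<close>
definition delta_basis :: "nat \<Rightarrow> nat set \<Rightarrow> nat set \<Rightarrow> ('a::comm_ring_1) tensor" where
  "delta_basis t A B = (\<lambda>(X,Y). \<Sum>C\<in>{C. C \<subseteq> B \<and> card C = t}.
      if A \<inter> C = {} \<and> X = A \<union> C \<and> Y = B - C then sgn2 C (B - C) * sgn2 A C else 0)"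

definition delta :: "nat \<Rightarrow> nat \<Rightarrow> nat \<Rightarrow> nat \<Rightarrow> ('a::comm_ring_1) tensor \<Rightarrow> 'a tensor" where
  "delta n a b t f = (\<lambda>Q. \<Sum>(A,B)\<in>idx n a \<times> idx n b. f (A,B) * delta_basis t A B Q)"

text \<open>theta_t on basis vector e_X (x) e_Y (X of size a+t):
  sum over a-subsets A of X of sgn(A,X-A) e_A (x) (e_{X-A} \<and> e_Y).\<close>
definition theta_basis :: "nat \<Rightarrow> nat set \<Rightarrow> nat set \<Rightarrow> ('a::comm_ring_1) tensor" where
  "theta_basis a X Y = (\<lambda>(A',B'). \<Sum>A\<in>{A. A \<subseteq> X \<and> card A = a}.
      if (X - A) \<inter> Y = {} \<and> A' = A \<and> B' = (X - A) \<union> Y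
      then sgn2 A (X - A) * sgn2 (X - A) Y else 0)"

definition theta :: "nat \<Rightarrow> nat \<Rightarrow> nat \<Rightarrow> nat \<Rightarrow> ('a::comm_ring_1) tensor \<Rightarrow> 'a tensor" where
  "theta n a b t g = (\<lambda>Q. \<Sum>(X,Y)\<in>idx n (a + t) \<times> idx n (b - t). g (X,Y) * theta_basis a X Y Q)"

definition Phi :: "nat \<Rightarrow> nat \<Rightarrow> nat \<Rightarrow> nat \<Rightarrow> ('a::comm_ring_1) tensor \<Rightarrow> 'a tensor" where
  "Phi n a b t f = theta n a b t (delta n a b t f)"

definition GL :: "nat \<Rightarrow> (nat \<Rightarrow> nat \<Rightarrow> 'a::comm_ring_1) set" where
  "GL n = {g. \<exists>h. \<forall>i<n. \<forall>j<n.
      (\<Sum>k<n. g i k * h k j) = (if i = j then 1 else 0) \<and>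
      (\<Sum>k<n. h i k * g k j) = (if i = j then 1 else 0)}"

text \<open>Minor det(g[S,S']) (rows S, columns S', both in increasing order), via Leibniz.\<close>
definition minor :: "(nat \<Rightarrow> nat \<Rightarrow> 'a::comm_ring_1) \<Rightarrow> nat set \<Rightarrow> nat set \<Rightarrow> 'a" where
  "minor g S S' = (\<Sum>p\<in>{p. bij_betw p S' S \<and> (\<forall>x. x \<notin> S' \<longrightarrow> p x = x)}.
      (-1) ^ card {(i,j). i \<in> S' \<and> j \<in> S' \<and> i < j \<and> p j < p i} * (\<Prod>j\<in>S'. g (p j) j))"

text \<open>Action of g on Lambda^a (x) Lambda^b: g e_{S'} = sum_S det(g[S,S']) e_S on each factor.\<close>
definition rho :: "nat \<Rightarrow> nat \<Rightarrow> nat \<Rightarrow> (nat \<Rightarrow> nat \<Rightarrow> 'a::comm_ring_1) \<Rightarrow> 'a tensor \<Rightarrow> 'a tensor" where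
  "rho n a b g f = (\<lambda>(S,T). if (S,T) \<in> idx n a \<times> idx n b then
      (\<Sum>(S',T')\<in>idx n a \<times> idx n b. minor g S S' * minor g T T' * f (S',T')) else 0)"

text \<open>Hom_G(Lambda^a (x) Lambda^b, Lambda^a (x) Lambda^b): K-linear, G-equivariant
endomorphisms of W n a b (maps are only relevant on W).\<close>
definition HomG :: "nat \<Rightarrow> nat \<Rightarrow> nat \<Rightarrow> (('a::comm_ring_1) tensor \<Rightarrow> 'a tensor) set" where
  "HomG n a b = {F. (\<forall>f\<in>W n a b. F f \<in> W n a b)
     \<and> (\<forall>f\<in>W n a b. \<forall>h\<in>W n a b. F (\<lambda>x. f x + h x) = (\<lambda>x. F f x + F h x))
     \<and> (\<forall>c. \<forall>f\<in>W n a b. F (\<lambda>x. c * f x) = (\<lambda>x. c * F f x))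
     \<and> (\<forall>g\<in>GL n. \<forall>f\<in>W n a b. F (rho n a b g f) = rho n a b g (F f))}"

end

theory Submission
  imports Defs
begin

text \<open>
  Each \<open>\<Phi>\<^sub>t\<close> is equivariant: in the bases \<open>e\<^sub>S \<otimes> e\<^sub>T\<close> the group acts through
  products of minors, the commutation of \<open>\<delta>\<^sub>t\<close> with this action is a double Laplace
  expansion, and \<open>\<theta>\<^sub>t\<close> is the transpose of \<open>\<delta>\<^sub>t\<close>.

  Let \<open>w = e\<^bsub>[0,a)\<^esub> \<otimes> e\<^bsub>[a,a+b)\<^esub>\<close>. For \<open>s \<le> b\<close> the set
  \<open>A\<^sub>s = [0,a-s) \<union> [a,a+s)\<close> has size \<open>a\<close> and meets \<open>[a,a+b)\<close> in \<open>s\<close> points. The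
  coefficient of \<open>\<Phi>\<^sub>t w\<close> at \<open>(A\<^sub>s, [0,a+b) - A\<^sub>s)\<close> vanishes for \<open>t < s\<close> and is
  \<open>\<plusminus>1\<close> for \<open>t = s\<close>; this triangular matrix gives linear independence. Conversely,
  subtract from an equivariant \<open>F\<close> the combination of the \<open>\<Phi>\<^sub>t\<close> that agrees with
  \<open>F w\<close> at these \<open>b + 1\<close> coordinates. The difference maps \<open>w\<close> to a vector of the same
  weight under the diagonal matrices, i.e. supported on pairs \<open>(A, [0,a+b) - A)\<close>, and
  invariant up to sign under the permutations fixing \<open>[0,a)\<close> and \<open>[a,a+b)\<close>, which move
  every such pair to some \<open>(A\<^sub>s, [0,a+b) - A\<^sub>s)\<close>; so it kills \<open>w\<close>. Finally \<open>w\<close>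
  generates the whole module (transvections increase \<open>|S \<inter> T|\<close>, permutations do the
  rest), so the difference vanishes.
\<close>

section \<open>Minors as sums over bijections\<close>

definition bijs :: "nat set \<Rightarrow> nat set \<Rightarrow> (nat \<Rightarrow> nat) set" where
  "bijs S' S = {p. bij_betw p S' S \<and> (\<forall>x. x \<notin> S' \<longrightarrow> p x = x)}"

definition inversions :: "(nat \<Rightarrow> nat) \<Rightarrow> nat set \<Rightarrow> nat" where
  "inversions p S = card {(i, j). i \<in> S \<and> j \<in> S \<and> i < j \<and> p j < p i}"

definition minor_term :: "(nat \<Rightarrow> nat \<Rightarrow> 'a::comm_ring_1) \<Rightarrow> (nat \<Rightarrow> nat) \<Rightarrow> nat set \<Rightarrow> 'a" where
  "minor_term g p S' = (-1) ^ inversions p S' * (\<Prod>j\<in>S'. g (p j) j)"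

definition fix_outside :: "nat set \<Rightarrow> (nat \<Rightarrow> nat) \<Rightarrow> nat \<Rightarrow> nat" where
  "fix_outside C p = (\<lambda>x. if x \<in> C then p x else x)"

lemma minor_eq_sum_bijs: "minor g S S' = (\<Sum>p\<in>bijs S' S. minor_term g p S')"
  unfolding minor_def bijs_def inversions_def minor_term_def by simp

lemma bijs_mapsto: "p \<in> bijs A B \<Longrightarrow> x \<in> A \<Longrightarrow> p x \<in> B"
  by (auto simp: bijs_def bij_betw_def)

lemma bijs_inj: "p \<in> bijs A B \<Longrightarrow> x \<in> A \<Longrightarrow> y \<in> A \<Longrightarrow> p x = p y \<Longrightarrow> x = y"
  by (auto simp: bijs_def bij_betw_def inj_on_def)

lemma fix_outside_in_bijs: "bij_betw p C D \<Longrightarrow> fix_outside C p \<in> bijs C D"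
  unfolding bijs_def fix_outside_def by (auto intro: bij_betw_cong[THEN iffD1])

lemma finite_bijs:
  assumes "finite S'"
  shows "finite (bijs S' S)"
proof (cases "finite S")
  case True
  let ?zero_outside = "\<lambda>p x. if x \<in> S' then p x else 0"
  have "?zero_outside ` bijs S' S \<subseteq> {f. \<forall>x. (x \<in> S' \<longrightarrow> f x \<in> S) \<and> (x \<notin> S' \<longrightarrow> f x = 0)}"
    by (auto simp: bijs_mapsto)
  then have "finite (?zero_outside ` bijs S' S)"
    using finite_set_of_finite_funs[OF assms True] by (rule finite_subset)
  moreover have "inj_on ?zero_outside (bijs S' S)"
    by (auto simp: inj_on_def bijs_def fun_eq_iff) metis
  ultimately show ?thesis
    by (rule finite_imageD)
next
  case False
  then have "bijs S' S = {}"
    using assms by (auto simp: bijs_def bij_betw_def)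
  then show ?thesis
    by simp
qed

lemma minor_eq_sum_support:
  assumes "finite S'" and vanish: "\<And>p. p \<in> bijs S' S \<Longrightarrow> p \<notin> Ps \<Longrightarrow> \<exists>j\<in>S'. g (p j) j = 0"
  shows "minor g S S' = (\<Sum>p\<in>bijs S' S \<inter> Ps. minor_term g p S')"
  unfolding minor_eq_sum_bijs
proof (rule sum.mono_neutral_right)
  show "\<forall>p\<in>bijs S' S - bijs S' S \<inter> Ps. minor_term g p S' = 0"
    using vanish \<open>finite S'\<close> by (auto simp: minor_term_def prod_zero)
qed (use finite_bijs[OF \<open>finite S'\<close>] in auto)

lemma minor_eq_0_if_card_ne:
  assumes "finite S'" "card S \<noteq> card S'"
  shows "minor g S S' = 0"
proof -
  have "bijs S' S = {}"
    using assms bij_betw_same_card unfolding bijs_def by fastforce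
  then show ?thesis
    by (simp add: minor_eq_sum_bijs)
qed

lemma inversions_cong: "(\<And>x. x \<in> S \<Longrightarrow> p x = q x) \<Longrightarrow> inversions p S = inversions q S"
  unfolding inversions_def by (rule arg_cong[where f = card]) auto

lemma minor_term_cong: "(\<And>x. x \<in> S \<Longrightarrow> p x = q x) \<Longrightarrow> minor_term g p S = minor_term g q S"
  unfolding minor_term_def using inversions_cong[of S p q] by simp

lemma minor_term_fix_outside: "minor_term g (fix_outside C p) C = minor_term g p C"
  by (rule minor_term_cong) (simp add: fix_outside_def)

lemma minor_cong:
  assumes "\<And>i j. i \<in> S \<Longrightarrow> j \<in> S' \<Longrightarrow> g i j = h i j"
  shows "minor g S S' = minor h S S'"
  unfolding minor_eq_sum_bijs minor_term_def
  using assms by (intro sum.cong refl arg_cong2[where f = "(*)"] prod.cong) (auto simp: bijs_mapsto)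

lemma minus_one_power_mult_self: "(-1::'a::comm_ring_1) ^ k * (-1) ^ k = 1"
  by (simp add: power_add[symmetric] mult_2[symmetric] power_mult)

lemma minus_one_power_mult_eq_0_iff: "(-1::'a::comm_ring_1) ^ k * x = 0 \<longleftrightarrow> x = 0"
  by (metis minus_one_power_mult_self mult.assoc mult_1 mult_zero_right)

lemma sgn2_mult_eq_0_iff: "sgn2 D Y * x = 0 \<longleftrightarrow> x = (0::'a::comm_ring_1)"
  unfolding sgn2_def by (rule minus_one_power_mult_eq_0_iff)

lemma sgn2_nonzero: "sgn2 D Y \<noteq> (0::'a::comm_ring_1)"
  using sgn2_mult_eq_0_iff[of D Y 1] by auto

lemma minus_one_power_card_Diff:
  assumes "finite X1" "finite X2"
  shows "(-1::'a::comm_ring_1) ^ card X1 = (-1) ^ card X2 * (-1) ^ (card (X1 - X2) + card (X2 - X1))"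
proof -
  have "card X1 = card (X1 - X2) + card (X1 \<inter> X2)" "card X2 = card (X2 - X1) + card (X1 \<inter> X2)"
    using card_Int_Diff[OF assms(1), of X2] card_Int_Diff[OF assms(2), of X1] by (simp_all add: Int_commute)
  then show ?thesis
    by (simp add: power_add algebra_simps minus_one_power_mult_self)
qed

lemma inversions_Un:
  assumes fin: "finite C" "finite E" and disj: "C \<inter> E = {}"
  shows "inversions r (C \<union> E) = inversions r C + inversions r E
    + card {(i, j). i \<in> C \<and> j \<in> E \<and> i < j \<and> r j < r i}
    + card {(i, j). i \<in> E \<and> j \<in> C \<and> i < j \<and> r j < r i}"
proof -
  let ?inv = "\<lambda>U V. {(i, j). i \<in> U \<and> j \<in> V \<and> i < j \<and> r j < r i}"
  have finite: "finite (?inv U V)" if "finite U" "finite V" for U V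
    by (rule finite_subset[of _ "U \<times> V"]) (use that in auto)
  have fins: "finite (?inv C C)" "finite (?inv E E)" "finite (?inv C E)" "finite (?inv E C)"
    using fin by (simp_all add: finite)
  have "inversions r (C \<union> E) = card (((?inv C C \<union> ?inv E E) \<union> ?inv C E) \<union> ?inv E C)"
    unfolding inversions_def by (rule arg_cong[where f = card]) auto
  also have "\<dots> = card ((?inv C C \<union> ?inv E E) \<union> ?inv C E) + card (?inv E C)"
    by (rule card_Un_disjoint) (use fins disj in auto)
  also have "card ((?inv C C \<union> ?inv E E) \<union> ?inv C E) = card (?inv C C \<union> ?inv E E) + card (?inv C E)"
    by (rule card_Un_disjoint) (use fins disj in auto)
  also have "card (?inv C C \<union> ?inv E E) = card (?inv C C) + card (?inv E E)"
    by (rule card_Un_disjoint) (use fins disj in auto)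
  finally show ?thesis
    by (simp add: inversions_def)
qed

lemma sgn2_image:
  assumes inj: "inj_on r (C \<union> E)"
  shows "sgn2 (r ` C) (r ` E) = (-1::'a::comm_ring_1) ^ card {(s, t). s \<in> C \<and> t \<in> E \<and> r t < r s}"
proof -
  let ?X = "{(s, t). s \<in> C \<and> t \<in> E \<and> r t < r s}"
  have "{(d, y). d \<in> r ` C \<and> y \<in> r ` E \<and> y < d} = (\<lambda>(s, t). (r s, r t)) ` ?X"
  proof
    show "{(d, y). d \<in> r ` C \<and> y \<in> r ` E \<and> y < d} \<subseteq> (\<lambda>(s, t). (r s, r t)) ` ?X"
    proof clarify
      fix s t assume "s \<in> C" "t \<in> E" "r t < r s"
      then show "(r s, r t) \<in> (\<lambda>(s, t). (r s, r t)) ` ?X"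
        by force
    qed
  qed auto
  moreover have "inj_on (\<lambda>(s, t). (r s, r t)) ?X"
    using inj by (auto simp: inj_on_def)
  ultimately show ?thesis
    by (simp add: sgn2_def card_image)
qed

text \<open>The cross pairs of \<open>C \<times> E\<close> that are out of order either before or after applying \<open>r\<close>,
  but not both, are exactly the inversions of \<open>r\<close> between \<open>C\<close> and \<open>E\<close>.\<close>
lemma minor_term_Un:
  assumes fin: "finite C" "finite E" and disj: "C \<inter> E = {}" and inj: "inj_on r (C \<union> E)"
  shows "sgn2 C E * minor_term g r C * minor_term g r E = sgn2 (r ` C) (r ` E) * minor_term g r (C \<union> E)"
proof -
  let ?X1 = "{(s, t). s \<in> C \<and> t \<in> E \<and> t < s}"
  let ?X2 = "{(s, t). s \<in> C \<and> t \<in> E \<and> r t < r s}"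
  let ?N1 = "{(i, j). i \<in> C \<and> j \<in> E \<and> i < j \<and> r j < r i}"
  let ?N2 = "{(i, j). i \<in> E \<and> j \<in> C \<and> i < j \<and> r j < r i}"
  have r_ne: "r s \<noteq> r t" "r t \<noteq> r s" if "s \<in> C" "t \<in> E" for s t
    using inj disj that by (auto dest: inj_onD)
  have "?X2 - ?X1 = ?N1"
    using disj by (auto simp: not_less_iff_gr_or_eq)
  moreover have "?X1 - ?X2 = ?N2\<inverse>"
    using r_ne by (auto simp: not_less_iff_gr_or_eq)
  then have "card (?X1 - ?X2) = card ?N2"
    by simp
  moreover have "finite ?X1" "finite ?X2"
    using fin by (auto intro: finite_subset[of _ "C \<times> E"])
  ultimately have "(-1::'a) ^ card ?X1 = (-1) ^ card ?X2 * (-1) ^ (card ?N1 + card ?N2)"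
    using minus_one_power_card_Diff[of ?X1 ?X2] by (simp add: add.commute)
  moreover have "sgn2 C E = (-1::'a) ^ card ?X1"
    by (simp add: sgn2_def)
  moreover have "(\<Prod>j\<in>C \<union> E. g (r j) j) = (\<Prod>j\<in>C. g (r j) j) * (\<Prod>j\<in>E. g (r j) j)"
    using fin disj by (rule prod.union_disjoint)
  ultimately show ?thesis
    unfolding minor_term_def inversions_Un[OF fin disj] sgn2_image[OF inj]
    by (simp add: power_add algebra_simps minus_one_power_mult_self)
qed

lemma bij_betw_preimage:
  assumes "bij_betw r B B'" "D \<subseteq> B'"
  shows "bij_betw r {x \<in> B. r x \<in> D} D"
proof (rule bij_betw_subset[OF assms(1)])
  show "r ` {x \<in> B. r x \<in> D} = D"
    using assms by (force simp: bij_betw_def)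
qed auto

lemma bij_betw_split_bijs:
  assumes disj: "D \<inter> Y = {}"
  shows "bij_betw (\<lambda>r. ({x \<in> B. r x \<in> D}, fix_outside {x \<in> B. r x \<in> D} r,
      fix_outside (B - {x \<in> B. r x \<in> D}) r))
    (bijs B (D \<union> Y)) (SIGMA C:Pow B. bijs C D \<times> bijs (B - C) Y)"
    (is "bij_betw ?split _ ?Sigma")
proof -
  let ?glue = "\<lambda>(C, p, q) x. if x \<in> C then p x else q x"
  have split: "?split r \<in> ?Sigma \<and> ?glue (?split r) = r" if r: "r \<in> bijs B (D \<union> Y)" for r
  proof -
    let ?C = "{x \<in> B. r x \<in> D}"
    have bij: "bij_betw r B (D \<union> Y)"
      using r by (simp add: bijs_def)
    have "B - ?C = {x \<in> B. r x \<in> Y}"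
      using bij disj by (auto simp: bij_betw_def)
    then have "fix_outside ?C r \<in> bijs ?C D" "fix_outside (B - ?C) r \<in> bijs (B - ?C) Y"
      using bij by (auto intro!: fix_outside_in_bijs bij_betw_preimage)
    moreover have "?glue (?split r) = r"
      using r by (auto simp: fix_outside_def bijs_def)
    ultimately show ?thesis
      by auto
  qed
  have glue: "?glue z \<in> bijs B (D \<union> Y) \<and> ?split (?glue z) = z" if z: "z \<in> ?Sigma" for z
  proof -
    obtain C p q where z_eq: "z = (C, p, q)" and C: "C \<subseteq> B"
      and p: "p \<in> bijs C D" and q: "q \<in> bijs (B - C) Y"
      using z by auto
    let ?r = "\<lambda>x. if x \<in> C then p x else q x"
    have "{x \<in> B. ?r x \<in> D} = C"
      using C disj bijs_mapsto[OF p] bijs_mapsto[OF q] by auto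
    then have "?split ?r = (C, p, q)"
      using p q by (auto simp: fix_outside_def bijs_def fun_eq_iff)
    moreover have "bij_betw ?r (C \<union> (B - C)) (D \<union> Y)"
      using p q disj by (intro bij_betw_combine) (auto simp: bijs_def intro: bij_betw_cong[THEN iffD1])
    then have "?r \<in> bijs B (D \<union> Y)"
      using C q by (auto simp: bijs_def Un_absorb1)
    ultimately show ?thesis
      unfolding z_eq prod.case by blast
  qed
  show ?thesis
    by (rule bij_betw_byWitness[where f' = ?glue]) (use split glue in \<open>auto simp del: fix_outside_def\<close>)
qed

lemma laplace_cols_disjoint:
  assumes fin: "finite B" "finite D" "finite Y" and disj: "D \<inter> Y = {}"
  shows "(\<Sum>C\<in>Pow B. sgn2 C (B - C) * minor g D C * minor g Y (B - C)) = sgn2 D Y * minor g (D \<union> Y) B"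
proof -
  let ?h = "\<lambda>(C, p, q). sgn2 C (B - C) * (minor_term g p C * minor_term g q (B - C))"
  have fin_bijs: "\<forall>C\<in>Pow B. finite (bijs C D \<times> bijs (B - C) Y)"
    using fin by (auto intro!: finite_bijs finite_subset[OF _ fin(1)])
  have "sgn2 C (B - C) * minor g D C * minor g Y (B - C)
      = (\<Sum>(p, q)\<in>bijs C D \<times> bijs (B - C) Y. ?h (C, p, q))" for C
  proof -
    have "minor g D C * minor g Y (B - C)
        = (\<Sum>p\<in>bijs C D. \<Sum>q\<in>bijs (B - C) Y. minor_term g p C * minor_term g q (B - C))"
      unfolding minor_eq_sum_bijs by (rule sum_product)
    then show ?thesis
      by (simp add: mult.assoc sum_distrib_left sum.cartesian_product case_prod_unfold)
  qed
  then have "(\<Sum>C\<in>Pow B. sgn2 C (B - C) * minor g D C * minor g Y (B - C))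
      = (\<Sum>C\<in>Pow B. \<Sum>(p, q)\<in>bijs C D \<times> bijs (B - C) Y. ?h (C, p, q))"
    by simp
  also have "\<dots> = sum ?h (SIGMA C:Pow B. bijs C D \<times> bijs (B - C) Y)"
    using sum.Sigma[OF _ fin_bijs] fin by (simp add: case_prod_unfold)
  also have "\<dots> = (\<Sum>r\<in>bijs B (D \<union> Y). ?h ({x \<in> B. r x \<in> D}, fix_outside {x \<in> B. r x \<in> D} r,
      fix_outside (B - {x \<in> B. r x \<in> D}) r))"
    by (rule sum.reindex_bij_betw[OF bij_betw_split_bijs[OF disj], symmetric])
  also have "\<dots> = (\<Sum>r\<in>bijs B (D \<union> Y). sgn2 D Y * minor_term g r B)"
  proof (rule sum.cong[OF refl])
    fix r assume r: "r \<in> bijs B (D \<union> Y)"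
    let ?C = "{x \<in> B. r x \<in> D}"
    have bij: "bij_betw r B (D \<union> Y)"
      using r by (simp add: bijs_def)
    have "B - ?C = {x \<in> B. r x \<in> Y}"
      using bij disj by (auto simp: bij_betw_def)
    then have "bij_betw r ?C D" "bij_betw r (B - ?C) Y"
      using bij by (auto intro: bij_betw_preimage)
    then have "sgn2 ?C (B - ?C) * minor_term g r ?C * minor_term g r (B - ?C)
        = sgn2 D Y * minor_term g r (?C \<union> (B - ?C))"
      using minor_term_Un[of ?C "B - ?C" r g] fin(1) bij by (auto simp: bij_betw_def intro: inj_on_subset)
    moreover have "?C \<union> (B - ?C) = B"
      by blast
    ultimately show "?h (?C, fix_outside ?C r, fix_outside (B - ?C) r) = sgn2 D Y * minor_term g r B"
      by (simp add: minor_term_fix_outside mult.assoc)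
  qed
  also have "\<dots> = sgn2 D Y * minor g (D \<union> Y) B"
    by (simp add: minor_eq_sum_bijs sum_distrib_left)
  finally show ?thesis .
qed

lemma bijs_inverse:
  assumes p: "p \<in> bijs A B"
  defines "q \<equiv> fix_outside B (the_inv_into A p)"
  shows "q \<in> bijs B A" "\<And>x. x \<in> A \<Longrightarrow> q (p x) = x" "\<And>y. y \<in> B \<Longrightarrow> p (q y) = y"
    "fix_outside A (the_inv_into B q) = p"
proof -
  have bij: "bij_betw p A B" and fixed: "\<And>x. x \<notin> A \<Longrightarrow> p x = x"
    using p by (auto simp: bijs_def)
  show q: "q \<in> bijs B A"
    unfolding q_def by (rule fix_outside_in_bijs[OF bij_betw_the_inv_into[OF bij]])
  show qp: "\<And>x. x \<in> A \<Longrightarrow> q (p x) = x"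
    using bij by (auto simp: q_def fix_outside_def bij_betw_def the_inv_into_f_f)
  show "\<And>y. y \<in> B \<Longrightarrow> p (q y) = y"
    using bij by (auto simp: q_def fix_outside_def bij_betw_def f_the_inv_into_f)
  have "the_inv_into B q x = p x" if "x \<in> A" for x
    using q qp[OF that] bijs_mapsto[OF p that]
    by (auto simp: bijs_def bij_betw_def intro: the_inv_into_f_eq)
  then show "fix_outside A (the_inv_into B q) = p"
    by (auto simp: fix_outside_def fixed fun_eq_iff)
qed

lemma minor_transpose:
  fixes g :: "nat \<Rightarrow> nat \<Rightarrow> 'a::comm_ring_1"
  shows "minor g S S' = minor (\<lambda>i j. g j i) S' S"
  unfolding minor_eq_sum_bijs
proof (rule sum.reindex_bij_witness[where j = "\<lambda>p. fix_outside S (the_inv_into S' p)"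
      and i = "\<lambda>q. fix_outside S' (the_inv_into S q)"])
  fix p assume p: "p \<in> bijs S' S"
  let ?q = "fix_outside S (the_inv_into S' p)"
  note q = bijs_inverse[OF p]
  show "fix_outside S' (the_inv_into S ?q) = p" "?q \<in> bijs S S'"
    using q by simp_all
  have "inversions ?q S = inversions p S'"
    unfolding inversions_def
  proof (rule bij_betw_same_card[of "\<lambda>(k, l). (?q l, ?q k)"], rule bij_betw_byWitness[where f' = "\<lambda>(i, j). (p j, p i)"])
    show "(\<lambda>(k, l). (?q l, ?q k)) ` {(i, j). i \<in> S \<and> j \<in> S \<and> i < j \<and> ?q j < ?q i}
        \<subseteq> {(i, j). i \<in> S' \<and> j \<in> S' \<and> i < j \<and> p j < p i}"
      using bijs_mapsto[OF q(1)] q(3) by auto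
    show "(\<lambda>(i, j). (p j, p i)) ` {(i, j). i \<in> S' \<and> j \<in> S' \<and> i < j \<and> p j < p i}
        \<subseteq> {(i, j). i \<in> S \<and> j \<in> S \<and> i < j \<and> ?q j < ?q i}"
      using bijs_mapsto[OF p] q(2) by auto
  qed (use q(2,3) in auto)
  moreover have "(\<Prod>j\<in>S. g j (?q j)) = (\<Prod>j\<in>S'. g (p j) j)"
    using prod.reindex_bij_betw[of p S' S "\<lambda>j. g j (?q j)"] p q(2) by (simp add: bijs_def)
  ultimately show "minor_term (\<lambda>i j. g j i) ?q S = minor_term g p S'"
    by (simp add: minor_term_def)
next
  fix q assume q: "q \<in> bijs S S'"
  show "fix_outside S (the_inv_into S' (fix_outside S' (the_inv_into S q))) = q"
    "fix_outside S' (the_inv_into S q) \<in> bijs S' S"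
    using bijs_inverse[OF q] by simp_all
qed

lemma inversions_pair: "x < y \<Longrightarrow> inversions p {x, y} = (if p y < p x then 1 else 0)"
proof -
  assume "x < y"
  then have "{(i, j). i \<in> {x, y} \<and> j \<in> {x, y} \<and> i < j \<and> p j < p i} = (if p y < p x then {(x, y)} else {})"
    by auto
  then show ?thesis
    by (simp add: inversions_def)
qed

lemma minor_2x2:
  fixes g :: "nat \<Rightarrow> nat \<Rightarrow> 'a::comm_ring_1"
  assumes "c < c'" "x < y"
  shows "minor g {c, c'} {x, y} = g c x * g c' y - g c' x * g c y"
proof -
  let ?p1 = "\<lambda>z. if z = x then c else if z = y then c' else z"
  let ?p2 = "\<lambda>z. if z = x then c' else if z = y then c else z"
  have "bijs {x, y} {c, c'} = {?p1, ?p2}"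
  proof
    show "bijs {x, y} {c, c'} \<subseteq> {?p1, ?p2}"
    proof
      fix p assume p: "p \<in> bijs {x, y} {c, c'}"
      then have "p x \<in> {c, c'}" "p y \<in> {c, c'}" "p x \<noteq> p y" "\<And>z. z \<notin> {x, y} \<Longrightarrow> p z = z"
        using assms bijs_mapsto[OF p] bijs_inj[OF p, of x y] by (auto simp: bijs_def)
      then show "p \<in> {?p1, ?p2}"
        by (auto simp: fun_eq_iff)
    qed
    show "{?p1, ?p2} \<subseteq> bijs {x, y} {c, c'}"
      using assms by (auto simp: bijs_def bij_betw_def)
  qed
  moreover have "?p1 \<noteq> ?p2"
    using assms by (auto simp: fun_eq_iff)
  moreover have "inversions ?p1 {x, y} = 0" "inversions ?p2 {x, y} = 1"
    using assms by (simp_all add: inversions_pair)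
  ultimately show ?thesis
    using assms by (simp add: minor_eq_sum_bijs minor_term_def)
qed

lemma minor_eq_0_if_equal_rows:
  fixes g :: "nat \<Rightarrow> nat \<Rightarrow> 'a::comm_ring_1"
  assumes fin: "finite S" "finite B" and rows: "c \<in> S" "c' \<in> S" "c < c'" "\<And>j. g c j = g c' j"
  shows "minor g S B = 0"
proof -
  have two_rows: "minor g {c, c'} C = 0" if "finite C" for C
  proof (cases "card C = 2")
    case True
    then obtain x y where "C = {x, y}" "x < y"
      by (auto simp: card_2_iff) (metis insert_commute linorder_neqE_nat)
    then show ?thesis
      using rows by (simp add: minor_2x2 mult.commute)
  next
    case False
    then show ?thesis
      using rows that by (intro minor_eq_0_if_card_ne) auto
  qed
  have S_eq: "{c, c'} \<union> (S - {c, c'}) = S"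
    using rows by auto
  have "sgn2 {c, c'} (S - {c, c'}) * minor g S B
      = (\<Sum>C\<in>Pow B. sgn2 C (B - C) * minor g {c, c'} C * minor g (S - {c, c'}) (B - C))"
    using laplace_cols_disjoint[of B "{c, c'}" "S - {c, c'}" g] fin unfolding S_eq by simp
  also have "\<dots> = 0"
    using fin(2) by (intro sum.neutral) (auto simp: two_rows finite_subset)
  finally show ?thesis
    by (simp add: sgn2_mult_eq_0_iff)
qed

lemma minor_shift_rows:
  fixes g h :: "nat \<Rightarrow> nat \<Rightarrow> 'a::comm_ring_1"
  assumes "\<And>i j. h (i + M) j = g i j"
  shows "minor h ((\<lambda>y. y + M) ` Y) C = minor g Y C"
  unfolding minor_eq_sum_bijs
proof (rule sum.reindex_bij_witness[where j = "\<lambda>p. fix_outside C (\<lambda>x. p x - M)"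
      and i = "\<lambda>p. fix_outside C (\<lambda>x. p x + M)"])
  fix p assume p: "p \<in> bijs C ((\<lambda>y. y + M) ` Y)"
  have shifted: "M \<le> p x \<and> p x - M \<in> Y" if "x \<in> C" for x
    using bijs_mapsto[OF p that] by auto
  show "fix_outside C (\<lambda>x. fix_outside C (\<lambda>x. p x - M) x + M) = p"
    using shifted p by (auto simp: fun_eq_iff fix_outside_def bijs_def)
  have "bij_betw (\<lambda>y. y - M) ((\<lambda>y. y + M) ` Y) Y"
    by (auto simp: bij_betw_def inj_on_def image_def)
  then have "bij_betw ((\<lambda>y. y - M) \<circ> p) C Y"
    using p by (auto simp: bijs_def intro: bij_betw_trans)
  then show "fix_outside C (\<lambda>x. p x - M) \<in> bijs C Y"
    by (auto intro: fix_outside_in_bijs simp: comp_def)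
  have "inversions (fix_outside C (\<lambda>x. p x - M)) C = inversions p C"
    unfolding inversions_def fix_outside_def using shifted
    by (intro arg_cong[where f = card]) fastforce
  moreover have "(\<Prod>j\<in>C. g (fix_outside C (\<lambda>x. p x - M) j) j) = (\<Prod>j\<in>C. h (p j) j)"
    using shifted assms by (intro prod.cong) (auto simp: fix_outside_def, metis le_add_diff_inverse2)
  ultimately show "minor_term g (fix_outside C (\<lambda>x. p x - M)) C = minor_term h p C"
    by (simp add: minor_term_def)
next
  fix q assume q: "q \<in> bijs C Y"
  show "fix_outside C (\<lambda>x. fix_outside C (\<lambda>x. q x + M) x - M) = q"
    using q by (auto simp: fun_eq_iff fix_outside_def bijs_def)
  have "bij_betw (\<lambda>y. y + M) Y ((\<lambda>y. y + M) ` Y)"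
    by (auto simp: bij_betw_def inj_on_def)
  then have "bij_betw ((\<lambda>y. y + M) \<circ> q) C ((\<lambda>y. y + M) ` Y)"
    using q by (auto simp: bijs_def intro: bij_betw_trans)
  then show "fix_outside C (\<lambda>x. q x + M) \<in> bijs C ((\<lambda>y. y + M) ` Y)"
    by (auto intro: fix_outside_in_bijs simp: comp_def)
qed

text \<open>For overlapping row sets, the expansion computes a minor of a matrix with a repeated row:
  shift a copy of the rows \<open>Y\<close> beyond \<open>D\<close> to make the row sets disjoint.\<close>
lemma laplace_cols_overlap:
  fixes g :: "nat \<Rightarrow> nat \<Rightarrow> 'a::comm_ring_1"
  assumes fin: "finite B" "finite D" "finite Y" and overlap: "D \<inter> Y \<noteq> {}"
  shows "(\<Sum>C\<in>Pow B. sgn2 C (B - C) * minor g D C * minor g Y (B - C)) = 0"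
proof -
  define M where "M = Suc (Max (D \<union> Y))"
  have below_M: "i < M" if "i \<in> D \<union> Y" for i
    using fin that by (simp add: M_def le_imp_less_Suc)
  define h where "h = (\<lambda>i j. if M \<le> i then g (i - M) j else g i j)"
  let ?Y = "(\<lambda>y. y + M) ` Y"
  have "minor h D C = minor g D C" for C
    using below_M by (intro minor_cong) (force simp: h_def)
  moreover have "minor h ?Y C = minor g Y C" for C
    by (rule minor_shift_rows) (simp add: h_def)
  ultimately have "(\<Sum>C\<in>Pow B. sgn2 C (B - C) * minor g D C * minor g Y (B - C))
      = (\<Sum>C\<in>Pow B. sgn2 C (B - C) * minor h D C * minor h ?Y (B - C))"
    by simp
  also have "\<dots> = sgn2 D ?Y * minor h (D \<union> ?Y) B"
    using fin below_M by (intro laplace_cols_disjoint) auto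
  also have "minor h (D \<union> ?Y) B = 0"
  proof -
    obtain c where "c \<in> D" "c \<in> Y"
      using overlap by auto
    moreover have "c < M"
      using below_M \<open>c \<in> D\<close> by blast
    ultimately show ?thesis
      using fin
      by (intro minor_eq_0_if_equal_rows[where c = c and c' = "c + M"]) (auto simp: h_def)
  qed
  finally show ?thesis
    by simp
qed

lemma laplace_cols:
  fixes g :: "nat \<Rightarrow> nat \<Rightarrow> 'a::comm_ring_1"
  assumes "finite B" "finite D" "finite Y"
  shows "(\<Sum>C\<in>Pow B. sgn2 C (B - C) * minor g D C * minor g Y (B - C)) =
    (if D \<inter> Y = {} then sgn2 D Y * minor g (D \<union> Y) B else 0)"
  using laplace_cols_disjoint[OF assms] laplace_cols_overlap[OF assms] by auto

lemma laplace_rows: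
  fixes g :: "nat \<Rightarrow> nat \<Rightarrow> 'a::comm_ring_1"
  assumes "finite X" "finite A" "finite C"
  shows "(\<Sum>A'\<in>Pow X. sgn2 A' (X - A') * minor g A' A * minor g (X - A') C) =
    (if A \<inter> C = {} then sgn2 A C * minor g X (A \<union> C) else 0)"
  using laplace_cols[OF assms, of "\<lambda>i j. g j i"]
  by (simp add: minor_transpose[of g _ A] minor_transpose[of g _ C] minor_transpose[of g X])

section \<open>Equivariance of the operators\<close>

text \<open>The action \<open>rho\<close> and the operators \<open>\<delta>\<^sub>t\<close>, \<open>\<theta>\<^sub>t\<close> are all kernel maps, so each
  equivariance statement reduces to an identity between composed kernels.\<close>
definition kernel_map :: "'i set \<Rightarrow> ('i \<Rightarrow> 'j \<Rightarrow> 'a::comm_ring_1) \<Rightarrow> ('i \<Rightarrow> 'a) \<Rightarrow> 'j \<Rightarrow> 'a" where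
  "kernel_map I K f = (\<lambda>Q. \<Sum>P\<in>I. f P * K P Q)"

lemma kernel_map_comp:
  "kernel_map J L (kernel_map I K f) = kernel_map I (\<lambda>P Q. \<Sum>P'\<in>J. K P P' * L P' Q) f"
  unfolding kernel_map_def
  by (simp add: fun_eq_iff sum_distrib_left sum_distrib_right mult.assoc sum.swap[of _ J])

lemma kernel_map_cong:
  "(\<And>P Q. P \<in> I \<Longrightarrow> K P Q = L P Q) \<Longrightarrow> kernel_map I K f = kernel_map I L f"
  unfolding kernel_map_def by (simp add: fun_eq_iff)

lemma kernel_map_add: "kernel_map I K (\<lambda>x. f x + h x) = (\<lambda>Q. kernel_map I K f Q + kernel_map I K h Q)"
  unfolding kernel_map_def by (simp add: fun_eq_iff distrib_right sum.distrib)

lemma kernel_map_smult: "kernel_map I K (\<lambda>x. c * f x) = (\<lambda>Q. c * kernel_map I K f Q)"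
  unfolding kernel_map_def by (simp add: fun_eq_iff sum_distrib_left mult.assoc)

lemma kernel_map_eq_0: "(\<And>P. P \<in> I \<Longrightarrow> K P Q = 0) \<Longrightarrow> kernel_map I K f Q = 0"
  unfolding kernel_map_def by simp

lemma idx_finite: "S \<in> idx n k \<Longrightarrow> finite S"
  by (auto simp: idx_def intro: finite_subset)

lemma finite_idx: "finite (idx n k)"
  unfolding idx_def by (rule finite_subset[of _ "Pow {..<n}"]) auto

abbreviation idx2 :: "nat \<Rightarrow> nat \<Rightarrow> nat \<Rightarrow> (nat set \<times> nat set) set" where
  "idx2 n a b \<equiv> idx n a \<times> idx n b"

lemma finite_idx2: "finite (idx2 n a b)"
  by (simp add: finite_idx)

definition rho_kernel :: "nat \<Rightarrow> nat \<Rightarrow> nat \<Rightarrow> (nat \<Rightarrow> nat \<Rightarrow> 'a::comm_ring_1)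
    \<Rightarrow> nat set \<times> nat set \<Rightarrow> nat set \<times> nat set \<Rightarrow> 'a" where
  "rho_kernel n a b g P Q =
    (if Q \<in> idx2 n a b then minor g (fst Q) (fst P) * minor g (snd Q) (snd P) else 0)"

lemma rho_eq_kernel_map: "rho n a b g = kernel_map (idx2 n a b) (rho_kernel n a b g)"
  by (auto simp: fun_eq_iff rho_def kernel_map_def rho_kernel_def case_prod_beta ac_simps)

lemma delta_eq_kernel_map: "delta n a b t = kernel_map (idx2 n a b) (\<lambda>P. delta_basis t (fst P) (snd P))"
  by (simp add: fun_eq_iff delta_def kernel_map_def case_prod_beta)

lemma theta_eq_kernel_map:
  "theta n a b t = kernel_map (idx2 n (a + t) (b - t)) (\<lambda>P. theta_basis a (fst P) (snd P))"
  by (simp add: fun_eq_iff theta_def kernel_map_def case_prod_beta)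

lemma delta_basis_eq:
  assumes "finite B"
  shows "delta_basis t A B (X, Y) =
    (if Y \<subseteq> B \<and> card (B - Y) = t \<and> A \<inter> (B - Y) = {} \<and> X = A \<union> (B - Y)
     then sgn2 (B - Y) Y * sgn2 A (B - Y) else (0::'a::comm_ring_1))"
proof -
  have "delta_basis t A B (X, Y) = (\<Sum>C\<in>{C. C \<subseteq> B \<and> card C = t}. if C = B - Y then
      (if Y \<subseteq> B \<and> A \<inter> C = {} \<and> X = A \<union> C then sgn2 C (B - C) * sgn2 A C else (0::'a)) else 0)"
    unfolding delta_basis_def prod.case by (intro sum.cong refl) auto
  also have "\<dots> = (if Y \<subseteq> B \<and> card (B - Y) = t \<and> A \<inter> (B - Y) = {} \<and> X = A \<union> (B - Y)
     then sgn2 (B - Y) Y * sgn2 A (B - Y) else 0)"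
    using assms by (auto simp: double_diff)
  finally show ?thesis .
qed

lemma theta_basis_eq:
  assumes "finite X"
  shows "theta_basis a X Y (A, B) =
    (if A \<subseteq> X \<and> card A = a \<and> (X - A) \<inter> Y = {} \<and> B = (X - A) \<union> Y
     then sgn2 A (X - A) * sgn2 (X - A) Y else (0::'a::comm_ring_1))"
proof -
  have "theta_basis a X Y (A, B) = (\<Sum>A'\<in>{A'. A' \<subseteq> X \<and> card A' = a}. if A' = A then
      (if (X - A') \<inter> Y = {} \<and> B = (X - A') \<union> Y then sgn2 A' (X - A') * sgn2 (X - A') Y else (0::'a)) else 0)"
    unfolding theta_basis_def prod.case by (intro sum.cong refl) auto
  also have "\<dots> = (if A \<subseteq> X \<and> card A = a \<and> (X - A) \<inter> Y = {} \<and> B = (X - A) \<union> Y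
     then sgn2 A (X - A) * sgn2 (X - A) Y else 0)"
    using assms by auto
  finally show ?thesis .
qed

lemma theta_basis_eq_delta_basis:
  assumes AB: "(A, B) \<in> idx2 n a b" and XY: "(X, Y) \<in> idx2 n (a + t) (b - t)"
  shows "theta_basis a X Y (A, B) = (delta_basis t A B (X, Y) :: 'a::comm_ring_1)"
proof -
  have fin: "finite A" "finite B" "finite X"
    using AB XY by (auto intro: idx_finite)
  have cards: "card A = a" "card X = a + t"
    using AB XY by (auto simp: idx_def)
  have "(A \<subseteq> X \<and> card A = a \<and> (X - A) \<inter> Y = {} \<and> B = (X - A) \<union> Y) \<longleftrightarrow>
      (Y \<subseteq> B \<and> card (B - Y) = t \<and> A \<inter> (B - Y) = {} \<and> X = A \<union> (B - Y))"
  proof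
    assume theta: "A \<subseteq> X \<and> card A = a \<and> (X - A) \<inter> Y = {} \<and> B = (X - A) \<union> Y"
    then have "B - Y = X - A"
      by blast
    moreover have "card (X - A) = t"
      using theta fin cards by (simp add: card_Diff_subset)
    ultimately show "Y \<subseteq> B \<and> card (B - Y) = t \<and> A \<inter> (B - Y) = {} \<and> X = A \<union> (B - Y)"
      using theta by auto
  next
    assume delta: "Y \<subseteq> B \<and> card (B - Y) = t \<and> A \<inter> (B - Y) = {} \<and> X = A \<union> (B - Y)"
    then have "X - A = B - Y"
      by blast
    then show "A \<subseteq> X \<and> card A = a \<and> (X - A) \<inter> Y = {} \<and> B = (X - A) \<union> Y"
      using delta cards by auto
  qed
  moreover have "X - A = B - Y" if "Y \<subseteq> B" "A \<inter> (B - Y) = {}" "X = A \<union> (B - Y)"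
    using that by blast
  ultimately show ?thesis
    using fin by (auto simp: theta_basis_eq delta_basis_eq mult.commute)
qed

lemma delta_basis_support:
  assumes AB: "(A, B) \<in> idx2 n a b" and t: "t \<le> b"
    and nonzero: "delta_basis t A B Q \<noteq> (0::'a::comm_ring_1)"
  shows "Q \<in> idx2 n (a + t) (b - t)"
proof -
  obtain X Y where Q: "Q = (X, Y)"
    by (cases Q)
  have fin: "finite A" "finite B"
    using AB by (auto intro: idx_finite)
  have *: "Y \<subseteq> B" "card (B - Y) = t" "A \<inter> (B - Y) = {}" "X = A \<union> (B - Y)"
    using nonzero delta_basis_eq[OF fin(2), of t A X Y] by (auto simp: Q split: if_splits)
  have "card X = a + t"
    using * fin AB by (simp add: card_Un_disjoint idx_def)
  moreover have "card Y = b - t"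
    using * fin AB card_Diff_subset[OF finite_subset[OF *(1) fin(2)] *(1)] by (auto simp: idx_def double_diff)
  ultimately show ?thesis
    using * AB by (auto simp: idx_def Q)
qed

lemma theta_basis_support:
  assumes XY: "(X, Y) \<in> idx2 n (a + t) (b - t)" and t: "t \<le> b"
    and nonzero: "theta_basis a X Y Q \<noteq> (0::'a::comm_ring_1)"
  shows "Q \<in> idx2 n a b"
proof -
  obtain A B where Q: "Q = (A, B)"
    by (cases Q)
  have fin: "finite X" "finite Y"
    using XY by (auto intro: idx_finite)
  have *: "A \<subseteq> X" "card A = a" "(X - A) \<inter> Y = {}" "B = (X - A) \<union> Y"
    using nonzero theta_basis_eq[OF fin(1), of a Y A B] by (auto simp: Q split: if_splits)
  have "card (X - A) = t"
    using * XY fin by (simp add: card_Diff_subset finite_subset idx_def)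
  then have "card B = b"
    using * fin XY t by (simp add: card_Un_disjoint idx_def)
  then show ?thesis
    using * XY by (auto simp: idx_def Q)
qed

lemma sum_mult_sum_if_eq:
  assumes "finite I"
  shows "(\<Sum>P\<in>I. h P * (\<Sum>C\<in>J. if R C \<and> P = \<phi> C then c C else 0)) =
    (\<Sum>C\<in>J. if R C \<and> \<phi> C \<in> I then h (\<phi> C) * c C else (0::'a::comm_ring_1))"
proof -
  have "(\<Sum>P\<in>I. h P * (if R C \<and> P = \<phi> C then c C else 0)) =
      (if R C \<and> \<phi> C \<in> I then h (\<phi> C) * c C else 0)" for C
    using assms by (cases "R C") (simp_all add: if_distrib[of "(*) _"] sum.delta' cong: if_cong)
  then show ?thesis
    by (simp add: sum_distrib_left sum.swap[of _ J])
qed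

lemma sum_delta_basis_targets:
  assumes AB: "(A, B) \<in> idx2 n a b"
  shows "(\<Sum>P\<in>idx2 n (a + t) (b - t). h P * delta_basis t A B P) =
    (\<Sum>C\<in>{C \<in> Pow B. card C = t \<and> A \<inter> C = {}}. h (A \<union> C, B - C) * (sgn2 C (B - C) * sgn2 A C))"
proof -
  let ?Ct = "{C. C \<subseteq> B \<and> card C = t}"
  have fin: "finite A" "finite B"
    using AB by (auto intro: idx_finite)
  have expand: "delta_basis t A B P = (\<Sum>C\<in>?Ct.
      if A \<inter> C = {} \<and> P = (A \<union> C, B - C) then sgn2 C (B - C) * sgn2 A C else 0)" for P
    by (cases P) (simp add: delta_basis_def)
  have "(\<Sum>P\<in>idx2 n (a + t) (b - t). h P * delta_basis t A B P) = (\<Sum>C\<in>?Ct.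
      if A \<inter> C = {} \<and> (A \<union> C, B - C) \<in> idx2 n (a + t) (b - t)
      then h (A \<union> C, B - C) * (sgn2 C (B - C) * sgn2 A C) else 0)"
    unfolding expand by (rule sum_mult_sum_if_eq) (simp add: finite_idx)
  also have "\<dots> = (\<Sum>C\<in>?Ct. if A \<inter> C = {} then h (A \<union> C, B - C) * (sgn2 C (B - C) * sgn2 A C) else 0)"
  proof (intro sum.cong refl if_cong)
    fix C assume "C \<in> ?Ct"
    then have "C \<subseteq> B" "card C = t" "finite C"
      using fin by (auto intro: finite_subset)
    then show "(A \<inter> C = {} \<and> (A \<union> C, B - C) \<in> idx2 n (a + t) (b - t)) = (A \<inter> C = {})"
      using AB fin by (auto simp: idx_def card_Un_disjoint card_Diff_subset)
  qed
  also have "\<dots> = (\<Sum>C\<in>{C \<in> Pow B. card C = t \<and> A \<inter> C = {}}. h (A \<union> C, B - C) * (sgn2 C (B - C) * sgn2 A C))"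
    using fin by (simp add: sum.inter_filter[symmetric] conj_assoc Pow_def)
  finally show ?thesis .
qed

lemma sum_delta_basis_sources:
  assumes XY: "(X, Y) \<in> idx2 n (a + t) (b - t)" and t: "t \<le> b"
  shows "(\<Sum>P\<in>idx2 n a b. h P * delta_basis t (fst P) (snd P) (X, Y)) =
    (\<Sum>A\<in>{A \<in> Pow X. card A = a \<and> (X - A) \<inter> Y = {}}.
      h (A, (X - A) \<union> Y) * (sgn2 A (X - A) * sgn2 (X - A) Y))"
proof -
  let ?Aa = "{A. A \<subseteq> X \<and> card A = a}"
  have fin: "finite X" "finite Y"
    using XY by (auto intro: idx_finite)
  have expand: "theta_basis a X Y P = (\<Sum>A\<in>?Aa.
      if (X - A) \<inter> Y = {} \<and> P = (A, (X - A) \<union> Y) then sgn2 A (X - A) * sgn2 (X - A) Y else 0)" for P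
    by (cases P) (simp add: theta_basis_def)
  have "(\<Sum>P\<in>idx2 n a b. h P * delta_basis t (fst P) (snd P) (X, Y)) =
      (\<Sum>P\<in>idx2 n a b. h P * theta_basis a X Y P)"
    using XY by (intro sum.cong refl) (auto simp: theta_basis_eq_delta_basis)
  also have "\<dots> = (\<Sum>A\<in>?Aa.
      if (X - A) \<inter> Y = {} \<and> (A, (X - A) \<union> Y) \<in> idx2 n a b
      then h (A, (X - A) \<union> Y) * (sgn2 A (X - A) * sgn2 (X - A) Y) else 0)"
    unfolding expand by (rule sum_mult_sum_if_eq) (simp add: finite_idx)
  also have "\<dots> = (\<Sum>A\<in>?Aa. if (X - A) \<inter> Y = {}
      then h (A, (X - A) \<union> Y) * (sgn2 A (X - A) * sgn2 (X - A) Y) else 0)"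
  proof (intro sum.cong refl if_cong)
    fix A assume "A \<in> ?Aa"
    then have "A \<subseteq> X" "card A = a" "card (X - A) = t"
      using fin XY by (auto simp: idx_def card_Diff_subset finite_subset)
    then show "((X - A) \<inter> Y = {} \<and> (A, (X - A) \<union> Y) \<in> idx2 n a b) = ((X - A) \<inter> Y = {})"
      using XY fin t by (auto simp: idx_def card_Un_disjoint)
  qed
  also have "\<dots> = (\<Sum>A\<in>{A \<in> Pow X. card A = a \<and> (X - A) \<inter> Y = {}}.
      h (A, (X - A) \<union> Y) * (sgn2 A (X - A) * sgn2 (X - A) Y))"
    using fin by (simp add: sum.inter_filter[symmetric] conj_assoc Pow_def)
  finally show ?thesis .
qed

lemma laplace_rows_cols:
  fixes g :: "nat \<Rightarrow> nat \<Rightarrow> 'a::comm_ring_1"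
  assumes fin: "finite A" "finite B" "finite X" "finite Y"
  shows "(\<Sum>C\<in>Pow B. sgn2 C (B - C) * minor g Y (B - C) *
      (if A \<inter> C = {} then sgn2 A C * minor g X (A \<union> C) else 0)) =
    (\<Sum>A'\<in>Pow X. sgn2 A' (X - A') * minor g A' A *
      (if (X - A') \<inter> Y = {} then sgn2 (X - A') Y * minor g ((X - A') \<union> Y) B else 0))"
proof -
  have "(\<Sum>C\<in>Pow B. sgn2 C (B - C) * minor g Y (B - C) *
      (if A \<inter> C = {} then sgn2 A C * minor g X (A \<union> C) else 0)) =
    (\<Sum>C\<in>Pow B. sgn2 C (B - C) * minor g Y (B - C) *
      (\<Sum>A'\<in>Pow X. sgn2 A' (X - A') * minor g A' A * minor g (X - A') C))"
    using fin by (intro sum.cong refl) (simp add: laplace_rows finite_subset)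
  also have "\<dots> = (\<Sum>A'\<in>Pow X. sgn2 A' (X - A') * minor g A' A *
      (\<Sum>C\<in>Pow B. sgn2 C (B - C) * minor g (X - A') C * minor g Y (B - C)))"
    by (simp add: sum_distrib_left sum.swap[of _ "Pow X"] ac_simps)
  also have "\<dots> = (\<Sum>A'\<in>Pow X. sgn2 A' (X - A') * minor g A' A *
      (if (X - A') \<inter> Y = {} then sgn2 (X - A') Y * minor g ((X - A') \<union> Y) B else 0))"
    using fin by (intro sum.cong refl) (simp add: laplace_cols)
  finally show ?thesis .
qed

text \<open>The matrix identity behind the equivariance of \<open>\<delta>\<^sub>t\<close>: both sides reduce, by Laplace
  expansion, to the same double sum over \<open>A' \<subseteq> X\<close> and \<open>C \<subseteq> B\<close>.\<close>
lemma delta_basis_minors_commute: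
  fixes g :: "nat \<Rightarrow> nat \<Rightarrow> 'a::comm_ring_1"
  assumes AB: "(A, B) \<in> idx2 n a b" and XY: "(X, Y) \<in> idx2 n (a + t) (b - t)" and t: "t \<le> b"
  shows "(\<Sum>P\<in>idx2 n (a + t) (b - t). delta_basis t A B P * (minor g X (fst P) * minor g Y (snd P))) =
    (\<Sum>P\<in>idx2 n a b. (minor g (fst P) A * minor g (snd P) B) * delta_basis t (fst P) (snd P) (X, Y))"
proof -
  have fin: "finite A" "finite B" "finite X" "finite Y"
    using AB XY by (auto intro: idx_finite)
  have cards: "card A = a" "card B = b" "card X = a + t" "card Y = b - t"
    using AB XY by (auto simp: idx_def)
  have "(\<Sum>P\<in>idx2 n (a + t) (b - t). delta_basis t A B P * (minor g X (fst P) * minor g Y (snd P))) =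
      (\<Sum>C\<in>{C \<in> Pow B. card C = t \<and> A \<inter> C = {}}.
        minor g X (A \<union> C) * minor g Y (B - C) * (sgn2 C (B - C) * sgn2 A C))"
    using sum_delta_basis_targets[OF AB, of "\<lambda>P. minor g X (fst P) * minor g Y (snd P)"]
    by (simp add: mult.commute)
  also have "\<dots> = (\<Sum>C\<in>Pow B. if card C = t \<and> A \<inter> C = {}
      then minor g X (A \<union> C) * minor g Y (B - C) * (sgn2 C (B - C) * sgn2 A C) else 0)"
    by (rule sum.inter_filter) (simp add: fin)
  also have "\<dots> = (\<Sum>C\<in>Pow B. sgn2 C (B - C) * minor g Y (B - C) *
      (if A \<inter> C = {} then sgn2 A C * minor g X (A \<union> C) else 0))"
  proof (intro sum.cong refl)
    fix C assume "C \<in> Pow B"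
    then have "card (B - C) = b - card C" "card C \<le> b" "finite (B - C)"
      using fin cards by (auto simp: card_Diff_subset finite_subset card_mono)
    then have "minor g Y (B - C) = 0" if "card C \<noteq> t"
      using that cards t by (intro minor_eq_0_if_card_ne) auto
    then show "(if card C = t \<and> A \<inter> C = {}
        then minor g X (A \<union> C) * minor g Y (B - C) * (sgn2 C (B - C) * sgn2 A C) else 0) =
      sgn2 C (B - C) * minor g Y (B - C) * (if A \<inter> C = {} then sgn2 A C * minor g X (A \<union> C) else 0)"
      by (auto simp: ac_simps)
  qed
  also have "\<dots> = (\<Sum>A'\<in>Pow X. sgn2 A' (X - A') * minor g A' A *
      (if (X - A') \<inter> Y = {} then sgn2 (X - A') Y * minor g ((X - A') \<union> Y) B else 0))"
    using fin by (rule laplace_rows_cols)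
  also have "\<dots> = (\<Sum>A'\<in>Pow X. if card A' = a \<and> (X - A') \<inter> Y = {}
      then minor g A' A * minor g ((X - A') \<union> Y) B * (sgn2 A' (X - A') * sgn2 (X - A') Y) else 0)"
  proof (intro sum.cong refl)
    fix A'
    have "minor g A' A = 0" if "card A' \<noteq> a"
      using that fin cards by (intro minor_eq_0_if_card_ne) auto
    then show "sgn2 A' (X - A') * minor g A' A *
        (if (X - A') \<inter> Y = {} then sgn2 (X - A') Y * minor g ((X - A') \<union> Y) B else 0) =
      (if card A' = a \<and> (X - A') \<inter> Y = {}
        then minor g A' A * minor g ((X - A') \<union> Y) B * (sgn2 A' (X - A') * sgn2 (X - A') Y) else 0)"
      by (auto simp: ac_simps)
  qed
  also have "\<dots> = (\<Sum>A'\<in>{A' \<in> Pow X. card A' = a \<and> (X - A') \<inter> Y = {}}.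
      minor g A' A * minor g ((X - A') \<union> Y) B * (sgn2 A' (X - A') * sgn2 (X - A') Y))"
    by (rule sum.inter_filter[symmetric]) (simp add: fin)
  also have "\<dots> = (\<Sum>P\<in>idx2 n a b. (minor g (fst P) A * minor g (snd P) B) * delta_basis t (fst P) (snd P) (X, Y))"
    using sum_delta_basis_sources[OF XY t, of "\<lambda>P. minor g (fst P) A * minor g (snd P) B"] by simp
  finally show ?thesis .
qed

lemma delta_equivariant:
  fixes g :: "nat \<Rightarrow> nat \<Rightarrow> 'a::comm_ring_1"
  assumes t: "t \<le> b"
  shows "rho n (a + t) (b - t) g (delta n a b t f) = delta n a b t (rho n a b g f)"
  unfolding rho_eq_kernel_map delta_eq_kernel_map kernel_map_comp
proof (rule kernel_map_cong)
  fix P Q assume P: "P \<in> idx2 n a b"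
  show "(\<Sum>P'\<in>idx2 n (a + t) (b - t). delta_basis t (fst P) (snd P) P' * rho_kernel n (a + t) (b - t) g P' Q) =
      (\<Sum>P'\<in>idx2 n a b. rho_kernel n a b g P P' * delta_basis t (fst P') (snd P') Q)"
  proof (cases "Q \<in> idx2 n (a + t) (b - t)")
    case True
    have "(\<Sum>P'\<in>idx2 n a b. rho_kernel n a b g P P' * delta_basis t (fst P') (snd P') Q) =
        (\<Sum>P'\<in>idx2 n a b. (minor g (fst P') (fst P) * minor g (snd P') (snd P)) * delta_basis t (fst P') (snd P') Q)"
      by (intro sum.cong refl) (simp add: rho_kernel_def)
    then show ?thesis
      using delta_basis_minors_commute[of "fst P" "snd P" n a b "fst Q" "snd Q" t g] P True t
      by (simp add: rho_kernel_def)
  next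
    case False
    then have "delta_basis t (fst P') (snd P') Q = (0::'a)" if "P' \<in> idx2 n a b" for P'
      using delta_basis_support[of "fst P'" "snd P'" n a b t Q] that t by auto
    with False show ?thesis
      by (simp add: rho_kernel_def)
  qed
qed

text \<open>Since \<open>\<theta>\<^sub>t\<close> is the transpose of \<open>\<delta>\<^sub>t\<close> and the minors of \<open>g\<close> are those of its
  transpose with rows and columns exchanged, this is the identity for \<open>\<delta>\<^sub>t\<close> applied to \<open>g\<^sup>T\<close>.\<close>
lemma theta_equivariant:
  fixes g :: "nat \<Rightarrow> nat \<Rightarrow> 'a::comm_ring_1"
  assumes t: "t \<le> b"
  shows "rho n a b g (theta n a b t f) = theta n a b t (rho n (a + t) (b - t) g f)"
  unfolding rho_eq_kernel_map theta_eq_kernel_map kernel_map_comp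
proof (rule kernel_map_cong)
  let ?gT = "\<lambda>i j. g j i"
  fix P Q assume P: "P \<in> idx2 n (a + t) (b - t)"
  show "(\<Sum>P'\<in>idx2 n a b. theta_basis a (fst P) (snd P) P' * rho_kernel n a b g P' Q) =
      (\<Sum>P'\<in>idx2 n (a + t) (b - t). rho_kernel n (a + t) (b - t) g P P' * theta_basis a (fst P') (snd P') Q)"
  proof (cases "Q \<in> idx2 n a b")
    case True
    have "(\<Sum>P'\<in>idx2 n a b. theta_basis a (fst P) (snd P) P' * rho_kernel n a b g P' Q) =
        (\<Sum>P'\<in>idx2 n a b. (minor ?gT (fst P') (fst Q) * minor ?gT (snd P') (snd Q)) * delta_basis t (fst P') (snd P') P)"
      using P True by (intro sum.cong refl)
        (auto simp: rho_kernel_def theta_basis_eq_delta_basis minor_transpose[of g "fst Q"] minor_transpose[of g "snd Q"])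
    also have "\<dots> = (\<Sum>P'\<in>idx2 n (a + t) (b - t). delta_basis t (fst Q) (snd Q) P' *
        (minor ?gT (fst P) (fst P') * minor ?gT (snd P) (snd P')))"
      using delta_basis_minors_commute[of "fst Q" "snd Q" n a b "fst P" "snd P" t ?gT] P True t by simp
    also have "\<dots> = (\<Sum>P'\<in>idx2 n (a + t) (b - t). rho_kernel n (a + t) (b - t) g P P' * theta_basis a (fst P') (snd P') Q)"
      using P True by (intro sum.cong refl)
        (auto simp: rho_kernel_def theta_basis_eq_delta_basis minor_transpose[of g _ "fst P"] minor_transpose[of g _ "snd P"])
    finally show ?thesis .
  next
    case False
    then have "theta_basis a (fst P') (snd P') Q = (0::'a)" if "P' \<in> idx2 n (a + t) (b - t)" for P'
      using theta_basis_support[of "fst P'" "snd P'" n a t b Q] that t by auto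
    with False show ?thesis
      by (simp add: rho_kernel_def)
  qed
qed

lemma Phi_equivariant:
  "t \<le> b \<Longrightarrow> rho n a b g (Phi n a b t f) = Phi n a b t (rho n a b g f)"
  unfolding Phi_def by (simp add: theta_equivariant delta_equivariant)

lemma Phi_in_W:
  assumes t: "t \<le> b"
  shows "Phi n a b t f \<in> W n a b"
proof -
  have "Phi n a b t f Q = 0" if "Q \<notin> idx2 n a b" for Q
    unfolding Phi_def theta_eq_kernel_map
    using theta_basis_support[of "fst P" "snd P" n a t b Q for P, OF _ t] that
    by (intro kernel_map_eq_0) auto
  then show ?thesis
    by (simp add: W_def)
qed

lemma Phi_add: "Phi n a b t (\<lambda>x. f x + h x) = (\<lambda>Q. Phi n a b t f Q + Phi n a b t h Q)"
  by (simp add: Phi_def delta_eq_kernel_map theta_eq_kernel_map kernel_map_add)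

lemma Phi_smult: "Phi n a b t (\<lambda>x. c * f x) = (\<lambda>Q. c * Phi n a b t f Q)"
  by (simp add: Phi_def delta_eq_kernel_map theta_eq_kernel_map kernel_map_smult)

lemma Phi_in_HomG: "t \<le> b \<Longrightarrow> Phi n a b t \<in> HomG n a b"
  unfolding HomG_def using Phi_in_W Phi_add Phi_smult Phi_equivariant[symmetric] by auto

section \<open>Test matrices and unit tensors\<close>

lemma sum_eq_single:
  assumes "finite A" "x \<in> A" "\<And>y. y \<in> A \<Longrightarrow> y \<noteq> x \<Longrightarrow> f y = 0"
  shows "sum f A = f x"
  using assms by (subst sum.remove[OF assms(1,2)]) (auto intro: sum.neutral)

lemma inversions_id: "inversions (\<lambda>x. x) S = 0"
proof -
  have "{(i, j). i \<in> S \<and> j \<in> S \<and> i < j \<and> j < i} = {}"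
    by auto
  then show ?thesis
    unfolding inversions_def by (metis card.empty)
qed

lemma minor_monomial:
  fixes g :: "nat \<Rightarrow> nat \<Rightarrow> 'a::comm_ring_1"
  assumes fin: "finite S'" and inj: "inj_on \<pi> S'"
    and g: "\<And>i j. j \<in> S' \<Longrightarrow> g i j = (if i = \<pi> j then l j else 0)"
  shows "minor g S S' = (if S = \<pi> ` S' then (-1) ^ inversions \<pi> S' * (\<Prod>j\<in>S'. l j) else 0)"
proof -
  let ?p = "fix_outside S' \<pi>"
  have "minor g S S' = (\<Sum>p\<in>bijs S' S \<inter> {?p}. minor_term g p S')"
    using fin
  proof (rule minor_eq_sum_support)
    fix p assume "p \<in> bijs S' S" "p \<notin> {?p}"
    then obtain j where "j \<in> S'" "p j \<noteq> \<pi> j"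
      by (auto simp: bijs_def fix_outside_def fun_eq_iff split: if_splits)
    then show "\<exists>j\<in>S'. g (p j) j = 0"
      by (auto simp: g)
  qed
  moreover have "bijs S' S \<inter> {?p} = (if S = \<pi> ` S' then {?p} else {})"
  proof -
    have "bij_betw ?p S' S \<longleftrightarrow> S = \<pi> ` S'"
      using inj by (auto simp: fix_outside_def bij_betw_def inj_on_def image_def)
    then show ?thesis
      by (auto simp: bijs_def fix_outside_def)
  qed
  moreover have "minor_term g ?p S' = (-1) ^ inversions \<pi> S' * (\<Prod>j\<in>S'. l j)"
    unfolding minor_term_def using inversions_cong[of S' ?p \<pi>] g by (simp add: fix_outside_def)
  ultimately show ?thesis
    by simp
qed

definition diag_two :: "nat \<Rightarrow> nat \<Rightarrow> nat \<Rightarrow> 'a::comm_ring_1" where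
  "diag_two j = (\<lambda>i k. if i = k then (if k = j then 2 else 1) else 0)"

definition perm_matrix :: "(nat \<Rightarrow> nat) \<Rightarrow> nat \<Rightarrow> nat \<Rightarrow> 'a::comm_ring_1" where
  "perm_matrix \<pi> = (\<lambda>i k. if i = \<pi> k then 1 else 0)"

definition transvection :: "nat \<Rightarrow> nat \<Rightarrow> nat \<Rightarrow> nat \<Rightarrow> 'a::comm_ring_1" where
  "transvection i0 j0 = (\<lambda>i k. (if i = k then 1 else 0) + (if i = i0 \<and> k = j0 then 1 else 0))"

lemma minor_diag_two:
  assumes "finite S'"
  shows "minor (diag_two j :: nat \<Rightarrow> nat \<Rightarrow> 'a::comm_ring_1) S S' =
    (if S = S' then (if j \<in> S' then 2 else 1) else 0)"
proof -
  have "minor (diag_two j :: nat \<Rightarrow> nat \<Rightarrow> 'a) S S' = (if S = (\<lambda>x. x) ` S'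
      then (-1) ^ inversions (\<lambda>x. x) S' * (\<Prod>k\<in>S'. if k = j then 2 else 1) else 0)"
    by (rule minor_monomial[OF assms]) (auto simp: diag_two_def)
  then show ?thesis
    using assms by (simp add: inversions_id prod.delta)
qed

lemma minor_perm_matrix:
  assumes "finite S'" "inj_on \<pi> S'"
  shows "minor (perm_matrix \<pi> :: nat \<Rightarrow> nat \<Rightarrow> 'a::comm_ring_1) S S' =
    (if S = \<pi> ` S' then (-1) ^ inversions \<pi> S' else 0)"
proof -
  have "minor (perm_matrix \<pi> :: nat \<Rightarrow> nat \<Rightarrow> 'a) S S' =
      (if S = \<pi> ` S' then (-1) ^ inversions \<pi> S' * (\<Prod>k\<in>S'. 1) else 0)"
    by (rule minor_monomial[OF assms]) (auto simp: perm_matrix_def)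
  then show ?thesis
    by simp
qed

lemma minor_transvection_id:
  assumes "finite S'" "j0 \<notin> S'"
  shows "minor (transvection i0 j0 :: nat \<Rightarrow> nat \<Rightarrow> 'a::comm_ring_1) S S' = (if S = S' then 1 else 0)"
proof -
  have "minor (transvection i0 j0 :: nat \<Rightarrow> nat \<Rightarrow> 'a) S S' =
      (if S = (\<lambda>x. x) ` S' then (-1) ^ inversions (\<lambda>x. x) S' * (\<Prod>k\<in>S'. 1) else 0)"
    by (rule minor_monomial[OF assms(1)]) (use assms(2) in \<open>auto simp: transvection_def\<close>)
  then show ?thesis
    by (simp add: inversions_id)
qed

lemma transvection_support:
  assumes p: "p \<in> bijs T S" and j0: "j0 \<in> T"
    and nonzero: "\<forall>j\<in>T. transvection i0 j0 (p j) j \<noteq> (0::'a::comm_ring_1)"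
  shows "p = (\<lambda>x. x) \<or> p = (\<lambda>x. if x = j0 then i0 else x)"
proof -
  have on_T: "p j = j \<or> (p j = i0 \<and> j = j0)" if "j \<in> T" for j
    using nonzero that by (auto simp: transvection_def split: if_splits)
  moreover have "p x = x" if "x \<notin> T" for x
    using p that by (auto simp: bijs_def)
  ultimately have off_j0: "p x = (if x = j0 then p j0 else x)" for x
    using j0 by (cases "x \<in> T") auto
  have "p j0 = j0 \<or> p j0 = i0"
    using on_T j0 by blast
  then show ?thesis
  proof (elim disjE)
    assume "p j0 = j0"
    then have "p = (\<lambda>x. x)"
      using off_j0 by (intro ext) (metis (full_types))
    then show ?thesis ..
  next
    assume "p j0 = i0"
    then have "p = (\<lambda>x. if x = j0 then i0 else x)"
      using off_j0 by (intro ext) (metis (full_types))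
    then show ?thesis ..
  qed
qed

lemma minor_transvection:
  assumes fin: "finite T" and j0: "j0 \<in> T" and i0: "i0 \<notin> T"
  shows "minor (transvection i0 j0) S T = (if S = T then 1 else 0)
    + (if S = insert i0 (T - {j0}) then (-1) ^ inversions (\<lambda>x. if x = j0 then i0 else x) T else 0)"
proof -
  let ?g = "transvection i0 j0 :: nat \<Rightarrow> nat \<Rightarrow> 'a"
  let ?p = "\<lambda>x. if x = j0 then i0 else x"
  have "i0 \<noteq> j0"
    using i0 j0 by auto
  have "minor ?g S T = (\<Sum>p\<in>bijs T S \<inter> {\<lambda>x. x, ?p}. minor_term ?g p T)"
    using fin by (rule minor_eq_sum_support) (use transvection_support[OF _ j0] in blast)
  also have "\<dots> = (if S = T then minor_term ?g (\<lambda>x. x) T else 0)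
      + (if S = insert i0 (T - {j0}) then minor_term ?g ?p T else 0)"
  proof -
    have "(\<lambda>x. x) \<in> bijs T S \<longleftrightarrow> S = T"
      by (auto simp: bijs_def bij_betw_def)
    moreover have "?p \<in> bijs T S \<longleftrightarrow> S = insert i0 (T - {j0})"
      using i0 j0 by (auto simp: bijs_def bij_betw_def inj_on_def)
    moreover have "(\<lambda>x. x) \<noteq> ?p"
      using \<open>i0 \<noteq> j0\<close> by (auto simp: fun_eq_iff)
    ultimately show ?thesis
      by (cases "S = T"; cases "S = insert i0 (T - {j0})") (auto simp: Int_insert_right)
  qed
  also have "minor_term ?g (\<lambda>x. x) T = 1"
    using \<open>i0 \<noteq> j0\<close> by (auto simp: minor_term_def inversions_id transvection_def intro!: prod.neutral)
  also have "minor_term ?g ?p T = (-1) ^ inversions ?p T"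
  proof -
    have "(\<Prod>j\<in>T. ?g (?p j) j) = 1"
      using \<open>i0 \<noteq> j0\<close> i0 by (intro prod.neutral) (auto simp: transvection_def)
    then show ?thesis
      by (simp add: minor_term_def)
  qed
  finally show ?thesis .
qed

lemma GL_I:
  assumes "\<And>i j. i < n \<Longrightarrow> j < n \<Longrightarrow>
    (\<Sum>k<n. g i k * h k j) = (if i = j then 1 else 0) \<and> (\<Sum>k<n. h i k * g k j) = (if i = j then 1 else 0)"
  shows "g \<in> GL n"
  using assms unfolding GL_def by blast

lemma diag_two_in_GL: "(diag_two j :: nat \<Rightarrow> nat \<Rightarrow> 'a::field_char_0) \<in> GL n"
proof (rule GL_I[where h = "\<lambda>i k. if i = k then (if i = j then 1 / 2 else 1) else 0"])
  fix i k assume "i < n" "k < n"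
  have diag: "(\<Sum>l<n. (if i = l then d l else 0) * (if l = k then e l else 0)) = (if i = k then d i * e i else 0)"
    for d e :: "nat \<Rightarrow> 'a"
    using \<open>i < n\<close> by (simp add: if_distrib[of "\<lambda>x. x * _"] sum.delta cong: if_cong)
  show "(\<Sum>l<n. diag_two j i l * (if l = k then (if l = j then 1 / 2 else 1) else 0)) =
      (if i = k then 1 else (0::'a)) \<and>
    (\<Sum>l<n. (if i = l then (if i = j then 1 / 2 else 1) else 0) * diag_two j l k) =
      (if i = k then 1 else (0::'a))"
    unfolding diag_two_def
    using diag[of "\<lambda>l. if l = j then 2 else 1" "\<lambda>l. if l = j then 1 / 2 else 1"]
      diag[of "\<lambda>l. if l = j then 1 / 2 else 1" "\<lambda>l. if l = j then 2 else 1"]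
    by (simp cong: if_cong)
qed

lemma transvection_in_GL:
  assumes "i0 \<noteq> j0"
  shows "(transvection i0 j0 :: nat \<Rightarrow> nat \<Rightarrow> 'a::comm_ring_1) \<in> GL n"
proof (rule GL_I[where h = "\<lambda>i k. (if i = k then 1 else 0) - (if i = i0 \<and> k = j0 then 1 else 0)"])
  let ?T = "transvection i0 j0 :: nat \<Rightarrow> nat \<Rightarrow> 'a"
  fix i j assume ij: "i < n" "j < n"
  have "(\<Sum>k<n. ?T i k * ((if k = j then 1 else 0) - (if k = i0 \<and> j = j0 then 1 else 0))) =
      (\<Sum>k<n. (if k = i then (if i = j then 1 else 0) - (if i = i0 \<and> j = j0 then 1 else 0) else 0)
        + (if k = j then (if i = i0 \<and> j0 = j then 1 else 0) else (0::'a)))"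
    using assms by (intro sum.cong refl) (auto simp: transvection_def)
  also have "\<dots> = (if i = j then 1 else 0)"
    using ij by (simp add: sum.distrib)
  finally have right: "(\<Sum>k<n. ?T i k * ((if k = j then 1 else 0) - (if k = i0 \<and> j = j0 then 1 else 0))) =
      (if i = j then 1 else 0)" .
  have "(\<Sum>k<n. ((if i = k then 1 else 0) - (if i = i0 \<and> k = j0 then 1 else 0)) * ?T k j) =
      (\<Sum>k<n. (if k = i then (if i = j then 1 else 0) + (if i = i0 \<and> j = j0 then 1 else 0) else 0)
        - (if k = j then (if i = i0 \<and> j0 = j then 1 else 0) else (0::'a)))"
    using assms by (intro sum.cong refl) (auto simp: transvection_def)
  also have "\<dots> = (if i = j then 1 else 0)"
    using ij by (simp add: sum_subtractf)
  finally show "(\<Sum>k<n. ?T i k * ((if k = j then 1 else 0) - (if k = i0 \<and> j = j0 then 1 else 0))) =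
      (if i = j then 1 else 0) \<and>
    (\<Sum>k<n. ((if i = k then 1 else 0) - (if i = i0 \<and> k = j0 then 1 else 0)) * ?T k j) =
      (if i = j then 1 else 0)"
    using right by simp
qed

lemma perm_matrix_in_GL:
  assumes bij: "bij_betw \<pi> {..<n} {..<n}"
  shows "(perm_matrix \<pi> :: nat \<Rightarrow> nat \<Rightarrow> 'a::comm_ring_1) \<in> GL n"
proof (rule GL_I[where h = "\<lambda>i k. perm_matrix \<pi> k i"])
  fix i j assume i: "i < n" and j: "j < n"
  have "i \<in> \<pi> ` {..<n}"
    using bij i by (simp add: bij_betw_def)
  then obtain k where k: "k < n" "\<pi> k = i"
    by auto
  have inj: "\<And>x y. x < n \<Longrightarrow> y < n \<Longrightarrow> \<pi> x = \<pi> y \<Longrightarrow> x = y"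
    using bij by (auto simp: bij_betw_def inj_on_def)
  have "(\<Sum>l<n. perm_matrix \<pi> i l * perm_matrix \<pi> j l) = (\<Sum>l<n. if l = k then (if i = j then 1 else 0) else (0::'a))"
    using k inj by (intro sum.cong refl) (auto simp: perm_matrix_def)
  moreover have "(\<Sum>l<n. perm_matrix \<pi> l i * perm_matrix \<pi> l j) = (\<Sum>l<n. if l = \<pi> i then (if i = j then 1 else 0) else (0::'a))"
    using inj i j by (intro sum.cong refl) (auto simp: perm_matrix_def)
  moreover have "\<pi> i < n"
    using bij i by (auto simp: bij_betw_def)
  ultimately show "(\<Sum>l<n. perm_matrix \<pi> i l * perm_matrix \<pi> j l) = (if i = j then 1 else (0::'a)) \<and>
      (\<Sum>l<n. perm_matrix \<pi> l i * perm_matrix \<pi> l j) = (if i = j then 1 else (0::'a))"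
    using k by simp
qed

definition unit_tensor :: "nat set \<times> nat set \<Rightarrow> ('a::comm_ring_1) tensor" where
  "unit_tensor P = (\<lambda>Q. if Q = P then 1 else 0)"

lemma unit_tensor_in_W: "P \<in> idx2 n a b \<Longrightarrow> unit_tensor P \<in> W n a b"
  by (auto simp: W_def unit_tensor_def)

lemma kernel_map_unit_tensor: "finite I \<Longrightarrow> P \<in> I \<Longrightarrow> kernel_map I K (unit_tensor P) = K P"
  by (simp add: fun_eq_iff kernel_map_def unit_tensor_def if_distrib[of "\<lambda>x. x * _"] cong: if_cong)

lemma rho_unit_tensor: "P \<in> idx2 n a b \<Longrightarrow> rho n a b g (unit_tensor P) = rho_kernel n a b g P"
  by (simp add: rho_eq_kernel_map kernel_map_unit_tensor finite_idx)

lemma Phi_unit_tensor: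
  assumes P: "P \<in> idx2 n a b" and Q: "Q \<in> idx2 n a b" and t: "t \<le> b"
  shows "Phi n a b t (unit_tensor P) Q = (\<Sum>C\<in>{C \<in> Pow (snd Q). card C = t \<and> fst Q \<inter> C = {}}.
      delta_basis t (fst P) (snd P) (fst Q \<union> C, snd Q - C) * (sgn2 C (snd Q - C) * sgn2 (fst Q) C))"
proof -
  have "Phi n a b t (unit_tensor P) Q =
      (\<Sum>P'\<in>idx2 n (a + t) (b - t). delta_basis t (fst P) (snd P) P' * theta_basis a (fst P') (snd P') Q)"
    using P by (simp add: Phi_def delta_eq_kernel_map theta_eq_kernel_map kernel_map_unit_tensor finite_idx)
      (simp add: kernel_map_def)
  also have "\<dots> = (\<Sum>P'\<in>idx2 n (a + t) (b - t). delta_basis t (fst P) (snd P) P' * delta_basis t (fst Q) (snd Q) P')"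
    using Q by (intro sum.cong refl) (auto simp: theta_basis_eq_delta_basis[symmetric])
  also have "\<dots> = (\<Sum>C\<in>{C \<in> Pow (snd Q). card C = t \<and> fst Q \<inter> C = {}}.
      delta_basis t (fst P) (snd P) (fst Q \<union> C, snd Q - C) * (sgn2 C (snd Q - C) * sgn2 (fst Q) C))"
    using Q sum_delta_basis_targets[where A = "fst Q" and B = "snd Q" and t = t] by simp
  finally show ?thesis .
qed

lemma image_in_idx:
  assumes "bij_betw \<pi> {..<n} {..<n}" "S \<in> idx n k"
  shows "\<pi> ` S \<in> idx n k"
proof -
  have "S \<subseteq> {..<n}" "card S = k"
    using assms(2) by (auto simp: idx_def)
  moreover from this have "inj_on \<pi> S"
    using assms(1) by (auto simp: bij_betw_def intro: inj_on_subset)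
  ultimately show ?thesis
    using assms(1) by (auto simp: idx_def bij_betw_def card_image)
qed

lemma rho_perm_unit_tensor:
  assumes bij: "bij_betw \<pi> {..<n} {..<n}" and P: "(S, T) \<in> idx2 n a b"
  shows "rho n a b (perm_matrix \<pi>) (unit_tensor (S, T)) =
    (\<lambda>Q. ((-1) ^ inversions \<pi> S * (-1) ^ inversions \<pi> T) * (unit_tensor (\<pi> ` S, \<pi> ` T) Q :: 'a::comm_ring_1))"
proof -
  have "finite S" "finite T" "inj_on \<pi> S" "inj_on \<pi> T"
    using bij P by (auto simp: bij_betw_def idx_def intro: inj_on_subset finite_subset)
  moreover have "(\<pi> ` S, \<pi> ` T) \<in> idx2 n a b"
    using image_in_idx[OF bij] P by auto
  ultimately show ?thesis
    using P by (simp add: rho_unit_tensor) (auto simp: fun_eq_iff rho_kernel_def minor_perm_matrix unit_tensor_def)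
qed

lemma rho_transvection_unit_tensor:
  assumes P: "(S, T) \<in> idx2 n a b" and "j0 \<notin> S" "j0 \<in> T" "i0 \<notin> T" "i0 < n"
  shows "rho n a b (transvection i0 j0) (unit_tensor (S, T)) = (\<lambda>Q. unit_tensor (S, T) Q
    + (-1) ^ inversions (\<lambda>x. if x = j0 then i0 else x) T * (unit_tensor (S, insert i0 (T - {j0})) Q :: 'a::comm_ring_1))"
proof -
  have fin: "finite S" "finite T"
    using P by (auto intro: idx_finite)
  have "card (insert i0 (T - {j0})) = card T"
    using fin(2) assms(3,4) card_Suc_Diff1[OF fin(2) assms(3)] by simp
  then have "(S, insert i0 (T - {j0})) \<in> idx2 n a b"
    using P assms by (auto simp: idx_def)
  moreover have "insert i0 (T - {j0}) \<noteq> T"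
    using assms by auto
  ultimately show ?thesis
    using P assms fin by (simp add: rho_unit_tensor)
      (auto simp: fun_eq_iff rho_kernel_def minor_transvection_id minor_transvection unit_tensor_def)
qed

lemma rho_diag_two:
  "rho n a b (diag_two j) u Q = (if Q \<in> idx2 n a b
    then ((if j \<in> fst Q then 2 else 1) * (if j \<in> snd Q then 2 else 1)) * u Q else (0::'a::comm_ring_1))"
proof (cases "Q \<in> idx2 n a b")
  case True
  have "kernel_map (idx2 n a b) (rho_kernel n a b (diag_two j)) u Q =
      u Q * rho_kernel n a b (diag_two j) Q Q"
    unfolding kernel_map_def
  proof (rule sum_eq_single[OF finite_idx2 True])
    fix P assume "P \<in> idx2 n a b" "P \<noteq> Q"
    then show "u P * rho_kernel n a b (diag_two j) P Q = 0"
      by (cases P; cases Q) (clarsimp simp: rho_kernel_def; simp add: minor_diag_two idx_finite; blast)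
  qed
  moreover have "finite (fst Q)" "finite (snd Q)"
    using True by (auto intro: idx_finite)
  ultimately show ?thesis
    using True by (simp add: rho_eq_kernel_map rho_kernel_def minor_diag_two mult.commute)
qed (simp add: rho_eq_kernel_map rho_kernel_def kernel_map_def)

lemma rho_perm_at_image:
  assumes bij: "bij_betw \<pi> {..<n} {..<n}" and P: "P \<in> idx2 n a b"
  shows "rho n a b (perm_matrix \<pi>) u (\<pi> ` fst P, \<pi> ` snd P) =
    ((-1) ^ inversions \<pi> (fst P) * (-1) ^ inversions \<pi> (snd P)) * (u P :: 'a::comm_ring_1)"
proof -
  have inj: "inj_on \<pi> (fst P')" "inj_on \<pi> (snd P')" "finite (fst P')" "finite (snd P')" if "P' \<in> idx2 n a b" for P'
    using bij that by (auto simp: bij_betw_def idx_def intro: inj_on_subset idx_finite)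
  have image_eq: "\<pi> ` S = \<pi> ` S' \<longleftrightarrow> S = S'" if "S \<in> idx n k" "S' \<in> idx n k'" for S S' k k'
    using bij that by (intro inj_on_image_eq_iff[of \<pi> "{..<n}"]) (auto simp: bij_betw_def idx_def)
  have img: "(\<pi> ` fst P, \<pi> ` snd P) \<in> idx2 n a b"
    using image_in_idx[OF bij] P by auto
  have "rho n a b (perm_matrix \<pi>) u (\<pi> ` fst P, \<pi> ` snd P) =
      u P * rho_kernel n a b (perm_matrix \<pi>) P (\<pi> ` fst P, \<pi> ` snd P)"
    unfolding rho_eq_kernel_map kernel_map_def
  proof (rule sum_eq_single[OF finite_idx2 P])
    fix P' assume P': "P' \<in> idx2 n a b" "P' \<noteq> P"
    then have "\<pi> ` fst P \<noteq> \<pi> ` fst P' \<or> \<pi> ` snd P \<noteq> \<pi> ` snd P'"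
      using P image_eq[of "fst P" a "fst P'" a] image_eq[of "snd P" b "snd P'" b] by (auto simp: prod_eq_iff)
    then show "u P' * rho_kernel n a b (perm_matrix \<pi>) P' (\<pi> ` fst P, \<pi> ` snd P) = 0"
      using inj[OF P'(1)] by (auto simp: rho_kernel_def minor_perm_matrix)
  qed
  then show ?thesis
    using P img by (simp add: rho_kernel_def minor_perm_matrix inj mult.commute)
qed

section \<open>Linear independence\<close>

lemma triangular_system_unique:
  fixes \<phi> :: "nat \<Rightarrow> nat \<Rightarrow> 'a::field"
  assumes zero: "\<And>s t. s \<le> b \<Longrightarrow> t < s \<Longrightarrow> \<phi> t s = 0" and diag: "\<And>s. s \<le> b \<Longrightarrow> \<phi> s s \<noteq> 0"
    and sol: "\<And>s. s \<le> b \<Longrightarrow> (\<Sum>t\<le>b. c t * \<phi> t s) = 0"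
  shows "s \<le> b \<Longrightarrow> c s = 0"
proof (induction "b - s" arbitrary: s rule: less_induct)
  case less
  have "(\<Sum>t\<le>b. c t * \<phi> t s) = c s * \<phi> s s"
  proof (rule sum_eq_single)
    fix t assume "t \<in> {..b}" "t \<noteq> s"
    then show "c t * \<phi> t s = 0"
      using less zero[of s t] by (cases "t < s") auto
  qed (use less.prems in auto)
  then show "c s = 0"
    using sol[OF less.prems] diag[OF less.prems] by simp
qed

lemma triangular_system_solvable:
  fixes \<phi> :: "nat \<Rightarrow> nat \<Rightarrow> 'a::field"
  assumes zero: "\<And>s t. s \<le> b \<Longrightarrow> t < s \<Longrightarrow> \<phi> t s = 0" and diag: "\<And>s. s \<le> b \<Longrightarrow> \<phi> s s \<noteq> 0"
  shows "\<exists>c. \<forall>s\<le>b. (\<Sum>t\<le>b. c t * \<phi> t s) = y s"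
proof -
  txt \<open>Back substitution: step \<open>m + 1\<close> corrects \<open>c\<close> at \<open>s0 = b - m\<close> only, which leaves the
    equations for \<open>s > s0\<close> intact because \<open>\<phi> s0 s = 0\<close> there.\<close>
  have "\<exists>c. \<forall>s. s \<le> b \<and> b < s + m \<longrightarrow> (\<Sum>t\<le>b. c t * \<phi> t s) = y s" for m
  proof (induction m)
    case (Suc m)
    then obtain c where c: "\<And>s. s \<le> b \<Longrightarrow> b < s + m \<Longrightarrow> (\<Sum>t\<le>b. c t * \<phi> t s) = y s"
      by blast
    show ?case
    proof (cases "m \<le> b")
      case True
      define s0 where "s0 = b - m"
      define c' where "c' t = c t + (if t = s0 then (y s0 - (\<Sum>t\<le>b. c t * \<phi> t s0)) / \<phi> s0 s0 else 0)" for t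
      have "s0 \<le> b"
        by (simp add: s0_def)
      then have "(\<Sum>t\<le>b. c' t * \<phi> t s) =
          (\<Sum>t\<le>b. c t * \<phi> t s) + (y s0 - (\<Sum>t\<le>b. c t * \<phi> t s0)) / \<phi> s0 s0 * \<phi> s0 s" for s
        by (simp add: c'_def distrib_right sum.distrib if_distrib[of "\<lambda>x. x * _"] sum.delta cong: if_cong)
      then have "(\<Sum>t\<le>b. c' t * \<phi> t s) = y s" if "s \<le> b" "b < s + Suc m" for s
        using that c zero diag[OF \<open>s0 \<le> b\<close>] True by (cases "s = s0") (auto simp: s0_def)
      then show ?thesis
        by blast
    qed (use c in \<open>auto intro!: exI[of _ c]\<close>)
  qed (intro exI allI impI, linarith)
  from this[of "Suc b"] show ?thesis
    by auto
qed

lemma Phi_unit_tensor_eq_0_below: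
  assumes P: "(S0, T0) \<in> idx2 n a b" and disj: "S0 \<inter> T0 = {}"
    and Q: "(A, B) \<in> idx2 n a b" and t: "t \<le> b" and below: "t < card (A \<inter> T0)"
  shows "Phi n a b t (unit_tensor (S0, T0)) (A, B) = (0::'a::comm_ring_1)"
proof -
  have fin: "finite T0"
    using P by (auto intro: idx_finite)
  have zero: "delta_basis t S0 T0 (A \<union> C, B - C) = (0::'a)" for C
  proof (rule ccontr)
    assume "delta_basis t S0 T0 (A \<union> C, B - C) \<noteq> (0::'a)"
    then have "card (T0 - (B - C)) = t" "A \<union> C = S0 \<union> (T0 - (B - C))"
      using delta_basis_eq[OF fin, of t S0 "A \<union> C" "B - C"] by (auto split: if_splits)
    moreover from this have "A \<inter> T0 \<subseteq> T0 - (B - C)"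
      using disj by blast
    ultimately show False
      using below fin by (metis card_mono finite_Diff leD)
  qed
  then show ?thesis
    unfolding Phi_unit_tensor[OF P Q t] fst_conv snd_conv by (intro sum.neutral) (simp add: zero)
qed

text \<open>For \<open>t = |A \<inter> T0|\<close> exactly one summand survives in the expansion of
  \<open>\<Phi>\<^sub>t (e\<^sub>S\<^sub>0 \<otimes> e\<^sub>T\<^sub>0)\<close> at \<open>(A, (S0 \<union> T0) - A)\<close>: the one with \<open>C = S0 - A\<close>.\<close>
lemma Phi_unit_tensor_diagonal:
  assumes P: "(S0, T0) \<in> idx2 n a b" and disj: "S0 \<inter> T0 = {}"
    and A: "A \<subseteq> S0 \<union> T0" "card A = a"
  shows "Phi n a b (card (A \<inter> T0)) (unit_tensor (S0, T0)) (A, (S0 \<union> T0) - A) \<noteq> (0::'a::comm_ring_1)"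
proof -
  let ?s = "card (A \<inter> T0)" and ?B = "(S0 \<union> T0) - A" and ?C = "S0 - A"
  have fin: "finite S0" "finite T0" "finite A"
    using P A by (auto intro: idx_finite finite_subset)
  have cards: "card S0 = a" "card T0 = b"
    using P by (auto simp: idx_def)
  have "card A = card (A \<inter> S0) + ?s"
    using A fin disj card_Un_disjoint[of "A \<inter> S0" "A \<inter> T0"] by (metis Int_Un_distrib finite_Int inf.absorb1 inf_assoc inf_bot_right inf_commute)
  then have card_C: "card ?C = ?s"
    using A cards fin by (simp add: card_Diff_subset_Int Int_commute)
  have s_le: "?s \<le> b"
    using card_mono[OF fin(2), of "A \<inter> T0"] cards by auto
  have Q: "(A, ?B) \<in> idx2 n a b"
    using A P fin cards disj by (auto simp: idx_def card_Diff_subset card_Un_disjoint)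
  let ?f = "\<lambda>C. delta_basis ?s S0 T0 (A \<union> C, ?B - C) * (sgn2 C (?B - C) * sgn2 A C) :: 'a"
  have "Phi n a b ?s (unit_tensor (S0, T0)) (A, ?B) = (\<Sum>C\<in>{C \<in> Pow ?B. card C = ?s \<and> A \<inter> C = {}}. ?f C)"
    using Phi_unit_tensor[OF P Q s_le] by simp
  also have "\<dots> = ?f ?C"
  proof (rule sum_eq_single)
    fix C assume C: "C \<in> {C \<in> Pow ?B. card C = ?s \<and> A \<inter> C = {}}" "C \<noteq> ?C"
    show "?f C = 0"
    proof (rule ccontr)
      assume "?f C \<noteq> 0"
      then have "delta_basis ?s S0 T0 (A \<union> C, ?B - C) \<noteq> (0::'a)"
        by auto
      then have "?B - C \<subseteq> T0"
        unfolding delta_basis_eq[OF fin(2)] by (simp split: if_splits)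
      then have "?C \<subseteq> C"
        using disj by blast
      then show False
        using C card_C fin card_subset_eq[of C ?C] by (auto intro: finite_subset)
    qed
  qed (use fin card_C in auto)
  also have "?f ?C \<noteq> 0"
  proof -
    have "A \<union> ?C = S0 \<union> (A \<inter> T0)" "?B - ?C = T0 - A" "T0 - (T0 - A) = A \<inter> T0"
      using A disj by auto
    then have "delta_basis ?s S0 T0 (A \<union> ?C, ?B - ?C) = (sgn2 (A \<inter> T0) (T0 - A) * sgn2 S0 (A \<inter> T0) :: 'a)"
      unfolding delta_basis_eq[OF fin(2)] using disj by auto
    then show ?thesis
      by (simp add: sgn2_mult_eq_0_iff sgn2_nonzero mult.assoc)
  qed
  finally show ?thesis .
qed

definition base_tensor :: "nat \<Rightarrow> nat \<Rightarrow> ('a::comm_ring_1) tensor" where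
  "base_tensor a b = unit_tensor ({..<a}, {a..<a + b})"

definition test_set :: "nat \<Rightarrow> nat \<Rightarrow> nat set" where
  "test_set a s = {..<a - s} \<union> {a..<a + s}"

definition test_index :: "nat \<Rightarrow> nat \<Rightarrow> nat \<Rightarrow> nat set \<times> nat set" where
  "test_index a b s = (test_set a s, ({..<a} \<union> {a..<a + b}) - test_set a s)"

lemma base_index_in_idx2: "a + b \<le> n \<Longrightarrow> ({..<a}, {a..<a + b}) \<in> idx2 n a b"
  by (auto simp: idx_def)

lemma base_tensor_in_W: "a + b \<le> n \<Longrightarrow> base_tensor a b \<in> W n a b"
  unfolding base_tensor_def by (rule unit_tensor_in_W[OF base_index_in_idx2])

lemma test_set_card:
  assumes "s \<le> b" "b \<le> a"
  shows "test_set a s \<subseteq> {..<a} \<union> {a..<a + b}" "card (test_set a s) = a"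
    "card (test_set a s \<inter> {a..<a + b}) = s"
proof -
  show "test_set a s \<subseteq> {..<a} \<union> {a..<a + b}"
    using assms by (auto simp: test_set_def)
  show "card (test_set a s) = a"
    using assms unfolding test_set_def by (subst card_Un_disjoint) auto
  have "test_set a s \<inter> {a..<a + b} = {a..<a + s}"
    using assms by (auto simp: test_set_def)
  then show "card (test_set a s \<inter> {a..<a + b}) = s"
    by simp
qed

lemma test_index_in_idx2:
  assumes "b \<le> a" "a + b \<le> n" "s \<le> b"
  shows "test_index a b s \<in> idx2 n a b"
proof -
  note A = test_set_card[OF assms(3,1)]
  have "card ({..<a} \<union> {a..<a + b}) = a + b"
    by (subst card_Un_disjoint) auto
  then have "card ({..<a} \<union> {a..<a + b} - test_set a s) = b"
    using A by (simp add: card_Diff_subset finite_subset[OF A(1)])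
  then show ?thesis
    using A assms(2) by (auto simp: test_index_def idx_def)
qed

lemma Phi_base_tensor_test_index:
  assumes "b \<le> a" "a + b \<le> n" "s \<le> b"
  shows "t < s \<Longrightarrow> Phi n a b t (base_tensor a b) (test_index a b s) = (0::'a::comm_ring_1)"
    and "Phi n a b s (base_tensor a b) (test_index a b s) \<noteq> (0::'a::comm_ring_1)"
proof -
  note P = base_index_in_idx2[OF assms(2)] and A = test_set_card[OF assms(3,1)]
    and Q = test_index_in_idx2[OF assms]
  have disj: "{..<a} \<inter> {a..<a + b} = {}"
    by auto
  show "t < s \<Longrightarrow> Phi n a b t (base_tensor a b) (test_index a b s) = (0::'a)"
    unfolding base_tensor_def test_index_def
    by (rule Phi_unit_tensor_eq_0_below[OF P disj Q[unfolded test_index_def]]) (use A(3) assms(3) in auto)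
  show "Phi n a b s (base_tensor a b) (test_index a b s) \<noteq> (0::'a)"
    using Phi_unit_tensor_diagonal[OF P disj A(1,2)] A(3) by (simp add: base_tensor_def test_index_def)
qed

lemma Phi_linearly_independent:
  fixes c :: "nat \<Rightarrow> 'a::field"
  assumes "b \<le> a" "a + b \<le> n" and zero: "\<forall>f\<in>W n a b. (\<lambda>x. \<Sum>t\<le>b. c t * Phi n a b t f x) = (\<lambda>x. 0)"
  shows "t \<le> b \<Longrightarrow> c t = 0"
proof (rule triangular_system_unique)
  let ?\<phi> = "\<lambda>t s. Phi n a b t (base_tensor a b) (test_index a b s) :: 'a"
  show "?\<phi> t s = 0" if "s \<le> b" "t < s" for s t
    using Phi_base_tensor_test_index(1)[OF assms(1,2) that(1)] that(2) .
  show "?\<phi> s s \<noteq> 0" if "s \<le> b" for s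
    using Phi_base_tensor_test_index(2)[OF assms(1,2) that] .
  show "(\<Sum>t\<le>b. c t * ?\<phi> t s) = 0" for s
    using fun_cong[OF zero[rule_format, OF base_tensor_in_W[OF assms(2)]], of "test_index a b s"] .
qed

section \<open>Generation by the base tensor\<close>

lemma exists_bij_preserving_labels:
  fixes labX labY :: "nat \<Rightarrow> 'l"
  assumes cnt: "\<And>l. card {x. x < n \<and> labX x = l} = card {x. x < n \<and> labY x = l}"
  shows "\<exists>\<pi>. bij_betw \<pi> {..<n} {..<n} \<and> (\<forall>x<n. labY (\<pi> x) = labX x)"
proof -
  have "\<exists>f. bij_betw f {x. x < n \<and> labX x = l} {x. x < n \<and> labY x = l}" for l
    by (rule finite_same_card_bij) (use cnt in auto)
  then obtain f where f: "\<And>l. bij_betw (f l) {x. x < n \<and> labX x = l} {x. x < n \<and> labY x = l}"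
    by metis
  define \<pi> where "\<pi> x = f (labX x) x" for x
  have mem: "\<pi> x < n \<and> labY (\<pi> x) = labX x" if "x < n" for x
    using that f[of "labX x"] by (auto simp: bij_betw_def \<pi>_def)
  have "inj_on \<pi> {..<n}"
  proof
    fix x y assume x: "x \<in> {..<n}" and y: "y \<in> {..<n}" and eq: "\<pi> x = \<pi> y"
    then have "labX x = labX y"
      using mem[of x] mem[of y] by auto
    with x y eq show "x = y"
      using f[of "labX x"] by (auto simp: bij_betw_def inj_on_def \<pi>_def)
  qed
  moreover have "\<pi> ` {..<n} = {..<n}"
  proof
    show "\<pi> ` {..<n} \<subseteq> {..<n}"
      using mem by auto
    show "{..<n} \<subseteq> \<pi> ` {..<n}"
    proof
      fix y assume "y \<in> {..<n}"
      then have "y \<in> f (labY y) ` {x. x < n \<and> labX x = labY y}"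
        using f[of "labY y"] by (auto simp: bij_betw_def)
      then obtain x where "x < n" "labX x = labY y" "y = f (labY y) x"
        by auto
      then have "x < n" "y = \<pi> x"
        by (simp_all add: \<pi>_def)
      then show "y \<in> \<pi> ` {..<n}"
        by auto
    qed
  qed
  ultimately show ?thesis
    using mem by (auto simp: bij_betw_def)
qed

lemma bij_image_eq:
  assumes bij: "bij_betw \<pi> {..<n} {..<n}" and U: "U \<subseteq> {..<n}" and U': "U' \<subseteq> {..<n}"
    and lab: "\<And>x. x < n \<Longrightarrow> \<pi> x \<in> U' \<longleftrightarrow> x \<in> U"
  shows "\<pi> ` U = U'"
proof
  show "\<pi> ` U \<subseteq> U'"
    using U lab by auto
  show "U' \<subseteq> \<pi> ` U"
  proof
    fix y assume y: "y \<in> U'"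
    then have "y \<in> \<pi> ` {..<n}"
      using U' bij by (auto simp: bij_betw_def)
    then show "y \<in> \<pi> ` U"
      using lab y by auto
  qed
qed

lemma fibre_pair_eq:
  assumes "S \<subseteq> {..<n}" "T \<subseteq> {..<n}"
  shows "{x. x < n \<and> (x \<in> S, x \<in> T) = l} = (case l of
    (True, True) \<Rightarrow> S \<inter> T | (True, False) \<Rightarrow> S - T | (False, True) \<Rightarrow> T - S
    | (False, False) \<Rightarrow> {..<n} - (S \<union> T))"
  using assms by (auto split: prod.splits bool.splits)

lemma fibre_triple_eq:
  assumes "S0 \<subseteq> {..<n}" "T0 \<subseteq> {..<n}" "S0 \<inter> T0 = {}" "A \<subseteq> S0 \<union> T0"
  shows "{x. x < n \<and> (x \<in> S0, x \<in> T0, x \<in> A) = l} = (case l of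
    (True, False, True) \<Rightarrow> A \<inter> S0 | (True, False, False) \<Rightarrow> S0 - A
    | (False, True, True) \<Rightarrow> A \<inter> T0 | (False, True, False) \<Rightarrow> T0 - A
    | (False, False, False) \<Rightarrow> {..<n} - (S0 \<union> T0) | _ \<Rightarrow> {})"
  using assms by (auto split: prod.splits bool.splits)

lemma exists_perm_moving_pair:
  fixes S T S' T' :: "nat set"
  assumes sub: "S \<subseteq> {..<n}" "T \<subseteq> {..<n}" "S' \<subseteq> {..<n}" "T' \<subseteq> {..<n}"
    and cards: "card S = card S'" "card T = card T'" "card (S \<inter> T) = card (S' \<inter> T')"
  obtains \<pi> where "bij_betw \<pi> {..<n} {..<n}" "\<pi> ` S = S'" "\<pi> ` T = T'"
proof -
  have fin: "finite S" "finite T" "finite S'" "finite T'"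
    using sub by (auto intro: finite_subset)
  have "card (S - T) = card (S' - T')" "card (T - S) = card (T' - S')"
    using fin cards by (simp_all add: card_Diff_subset_Int Int_commute)
  moreover have "card (S \<union> T) = card (S' \<union> T')"
    using card_Un_Int[of S T] card_Un_Int[of S' T'] fin cards by simp
  then have "card ({..<n} - (S \<union> T)) = card ({..<n} - (S' \<union> T'))"
    using fin sub by (simp add: card_Diff_subset)
  ultimately have "card {x. x < n \<and> (x \<in> S, x \<in> T) = l} = card {x. x < n \<and> (x \<in> S', x \<in> T') = l}" for l
    unfolding fibre_pair_eq[OF sub(1,2)] fibre_pair_eq[OF sub(3,4)] using cards
    by (auto split: prod.splits bool.splits)
  then obtain \<pi> where bij: "bij_betw \<pi> {..<n} {..<n}" and lab: "\<forall>x<n. (\<pi> x \<in> S', \<pi> x \<in> T') = (x \<in> S, x \<in> T)"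
    using exists_bij_preserving_labels[where labX = "\<lambda>x. (x \<in> S, x \<in> T)" and labY = "\<lambda>x. (x \<in> S', x \<in> T')"]
    by blast
  show thesis
    using sub lab by (intro that[OF bij] bij_image_eq[OF bij]) auto
qed

lemma exists_perm_moving_subset:
  fixes S0 T0 A A' :: "nat set"
  assumes sub: "S0 \<subseteq> {..<n}" "T0 \<subseteq> {..<n}" and disj: "S0 \<inter> T0 = {}"
    and A: "A \<subseteq> S0 \<union> T0" "A' \<subseteq> S0 \<union> T0" and cards: "card A = card A'" "card (A \<inter> T0) = card (A' \<inter> T0)"
  obtains \<pi> where "bij_betw \<pi> {..<n} {..<n}" "\<pi> ` S0 = S0" "\<pi> ` T0 = T0" "\<pi> ` A = A'"
proof -
  have fin: "finite S0" "finite T0" "finite A" "finite A'"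
    using sub A by (auto intro: finite_subset)
  have "card A = card (A \<inter> S0) + card (A \<inter> T0)" "card A' = card (A' \<inter> S0) + card (A' \<inter> T0)"
    using A fin disj card_Un_disjoint[of "A \<inter> S0" "A \<inter> T0"] card_Un_disjoint[of "A' \<inter> S0" "A' \<inter> T0"]
    by (simp_all add: Int_Un_distrib[symmetric] Int_absorb2 Int_assoc Int_left_commute)
  then have S0_part: "card (A \<inter> S0) = card (A' \<inter> S0)"
    using cards by simp
  then have "card (S0 - A) = card (S0 - A')" "card (T0 - A) = card (T0 - A')"
    using fin cards by (simp_all add: card_Diff_subset_Int Int_commute)
  then have "card {x. x < n \<and> (x \<in> S0, x \<in> T0, x \<in> A) = l} =
      card {x. x < n \<and> (x \<in> S0, x \<in> T0, x \<in> A') = l}" for l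
    unfolding fibre_triple_eq[OF sub disj A(1)] fibre_triple_eq[OF sub disj A(2)] using cards S0_part
    by (auto split: prod.splits bool.splits)
  then obtain \<pi> where bij: "bij_betw \<pi> {..<n} {..<n}"
    and lab: "\<forall>x<n. (\<pi> x \<in> S0, \<pi> x \<in> T0, \<pi> x \<in> A') = (x \<in> S0, x \<in> T0, x \<in> A)"
    using exists_bij_preserving_labels[where labX = "\<lambda>x. (x \<in> S0, x \<in> T0, x \<in> A)"
        and labY = "\<lambda>x. (x \<in> S0, x \<in> T0, x \<in> A')"]
    by blast
  have "A \<subseteq> {..<n}" "A' \<subseteq> {..<n}"
    using A sub by auto
  then show thesis
    using sub lab by (intro that[OF bij] bij_image_eq[OF bij]) auto
qed

definition stable_subspace :: "nat \<Rightarrow> nat \<Rightarrow> nat \<Rightarrow> ('a::comm_ring_1) tensor set \<Rightarrow> bool" where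
  "stable_subspace n a b Z \<longleftrightarrow>
    (\<forall>f\<in>Z. \<forall>h\<in>Z. (\<lambda>x. f x + h x) \<in> Z) \<and> (\<forall>c. \<forall>f\<in>Z. (\<lambda>x. c * f x) \<in> Z) \<and>
    (\<forall>g\<in>GL n. \<forall>f\<in>Z. rho n a b g f \<in> Z)"

lemma stable_subspaceD:
  assumes "stable_subspace n a b Z"
  shows stable_subspace_add: "f \<in> Z \<Longrightarrow> h \<in> Z \<Longrightarrow> (\<lambda>x. f x + h x) \<in> Z"
    and stable_subspace_smult: "f \<in> Z \<Longrightarrow> (\<lambda>x. c * f x) \<in> Z"
    and stable_subspace_rho: "f \<in> Z \<Longrightarrow> g \<in> GL n \<Longrightarrow> rho n a b g f \<in> Z"
  using assms unfolding stable_subspace_def by blast+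

lemma stable_subspace_sum:
  assumes Z: "stable_subspace n a b Z" "z \<in> Z" and fin: "finite A" and mem: "\<And>P. P \<in> A \<Longrightarrow> v P \<in> Z"
  shows "(\<lambda>x. \<Sum>P\<in>A. c P * v P x) \<in> Z"
  using fin mem
proof (induction A rule: finite_induct)
  case empty
  have "(\<lambda>x. 0 * z x) \<in> Z"
    using Z by (rule stable_subspace_smult)
  then show ?case
    by simp
next
  case (insert P A)
  then have "(\<lambda>x. c P * v P x + (\<Sum>P\<in>A. c P * v P x)) \<in> Z"
    using stable_subspace_add[OF Z(1) stable_subspace_smult[OF Z(1)]] by simp
  with insert.hyps show ?case
    by simp
qed

lemma W_eq_sum_unit_tensors:
  assumes "f \<in> W n a b"
  shows "f = (\<lambda>x. \<Sum>P\<in>idx2 n a b. f P * unit_tensor P x)"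
proof
  fix x
  show "f x = (\<Sum>P\<in>idx2 n a b. f P * unit_tensor P x)"
  proof (cases "x \<in> idx2 n a b")
    case True
    then show ?thesis
      by (subst sum_eq_single[OF finite_idx2 True]) (auto simp: unit_tensor_def)
  next
    case False
    then have "(\<Sum>P\<in>idx2 n a b. f P * unit_tensor P x) = 0"
      by (intro sum.neutral) (auto simp: unit_tensor_def)
    moreover have "f x = 0"
      using assms False unfolding W_def by blast
    ultimately show ?thesis
      by simp
  qed
qed

lemma stable_subspace_unscale:
  assumes "stable_subspace n a b Z" "(\<lambda>x. (-1) ^ m * f x) \<in> Z"
  shows "f \<in> Z"
proof -
  have "(\<lambda>x. (-1) ^ m * ((-1) ^ m * f x)) \<in> Z"
    using stable_subspace_smult[OF assms] .
  moreover have "(\<lambda>x. (-1) ^ m * ((-1) ^ m * f x)) = f"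
    by (simp add: mult.assoc[symmetric] minus_one_power_mult_self)
  ultimately show ?thesis
    by simp
qed

definition overlap_block :: "nat \<Rightarrow> nat \<Rightarrow> nat \<Rightarrow> nat set" where
  "overlap_block a b k = {..<k} \<union> {a + k..<a + b}"

lemma overlap_block:
  assumes "k \<le> b" "b \<le> a" "a + b \<le> n"
  shows "({..<a}, overlap_block a b k) \<in> idx2 n a b" "{..<a} \<inter> overlap_block a b k = {..<k}"
proof -
  have "card (overlap_block a b k) = b"
    using assms unfolding overlap_block_def by (subst card_Un_disjoint) auto
  then show "({..<a}, overlap_block a b k) \<in> idx2 n a b"
    using assms by (auto simp: idx_def overlap_block_def)
  show "{..<a} \<inter> overlap_block a b k = {..<k}"
    using assms by (auto simp: overlap_block_def)
qed

text \<open>The transvection \<open>e\<^bsub>a+k\<^esub> \<mapsto> e\<^bsub>a+k\<^esub> + e\<^sub>k\<close> raises the overlap with \<open>{..<a}\<close> by one.\<close>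
lemma overlap_unit_tensor_in_stable_subspace:
  assumes ab: "b \<le> a" "a + b \<le> n" and Z: "stable_subspace n a b Z" "base_tensor a b \<in> Z"
  shows "k \<le> b \<Longrightarrow> unit_tensor ({..<a}, overlap_block a b k) \<in> Z"
proof (induction k)
  case 0
  then show ?case
    using Z by (simp add: base_tensor_def overlap_block_def)
next
  case (Suc k)
  let ?T = "overlap_block a b" and ?p = "\<lambda>x. if x = a + k then k else x"
  let ?e = "unit_tensor ({..<a}, ?T k) :: 'a tensor"
  have "rho n a b (transvection k (a + k)) ?e =
      (\<lambda>x. ?e x + (-1) ^ inversions ?p (?T k) * unit_tensor ({..<a}, insert k (?T k - {a + k})) x)"
    using overlap_block(1)[of k b a n] Suc.prems ab
    by (intro rho_transvection_unit_tensor) (auto simp: overlap_block_def)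
  moreover have "insert k (?T k - {a + k}) = ?T (Suc k)"
    using Suc.prems ab by (auto simp: overlap_block_def)
  ultimately have combination: "(\<lambda>x. rho n a b (transvection k (a + k)) ?e x + (-1) * ?e x) =
      (\<lambda>x. (-1) ^ inversions ?p (?T k) * unit_tensor ({..<a}, ?T (Suc k)) x)"
    by simp
  have "?e \<in> Z"
    using Suc by simp
  moreover from this have "rho n a b (transvection k (a + k)) ?e \<in> Z"
    by (rule stable_subspace_rho[OF Z(1)]) (use Suc.prems ab in \<open>simp add: transvection_in_GL\<close>)
  ultimately have "(\<lambda>x. rho n a b (transvection k (a + k)) ?e x + (-1) * ?e x) \<in> Z"
    using stable_subspace_add[OF Z(1)] stable_subspace_smult[OF Z(1), where c = "-1"] by blast
  then show ?case
    unfolding combination by (rule stable_subspace_unscale[OF Z(1)])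
qed

text \<open>Permutations carry \<open>({..<a}, overlap_block a b d)\<close> to every pair of index sets with
  overlap \<open>d\<close>.\<close>
lemma unit_tensor_in_stable_subspace:
  assumes ab: "b \<le> a" "a + b \<le> n" and Z: "stable_subspace n a b Z" "base_tensor a b \<in> Z"
    and P: "(S, T) \<in> idx2 n a b"
  shows "unit_tensor (S, T) \<in> Z"
proof -
  let ?d = "card (S \<inter> T)"
  have "finite T" "card T = b"
    using P by (auto simp: idx_def intro: idx_finite)
  then have "?d \<le> b"
    using card_mono[of T "S \<inter> T"] by auto
  note block = overlap_block[OF \<open>?d \<le> b\<close> ab]
  obtain \<pi> where bij: "bij_betw \<pi> {..<n} {..<n}" and img: "\<pi> ` {..<a} = S" "\<pi> ` overlap_block a b ?d = T"
  proof (rule exists_perm_moving_pair)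
    show "card {..<a} = card S" "card (overlap_block a b ?d) = card T"
      "card ({..<a} \<inter> overlap_block a b ?d) = card (S \<inter> T)"
      using block P by (auto simp: idx_def)
  qed (use block P in \<open>auto simp: idx_def\<close>)
  have "rho n a b (perm_matrix \<pi>) (unit_tensor ({..<a}, overlap_block a b ?d)) \<in> Z"
    using overlap_unit_tensor_in_stable_subspace[OF assms(1-4) \<open>?d \<le> b\<close>] perm_matrix_in_GL[OF bij]
    by (rule stable_subspace_rho[OF Z(1)])
  then have "(\<lambda>x. (-1) ^ (inversions \<pi> {..<a} + inversions \<pi> (overlap_block a b ?d)) * unit_tensor (S, T) x) \<in> Z"
    by (simp add: rho_perm_unit_tensor[OF bij block(1)] img power_add)
  then show ?thesis
    by (rule stable_subspace_unscale[OF Z(1)])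
qed

lemma W_subset_stable_subspace:
  fixes Z :: "('a::comm_ring_1) tensor set"
  assumes "b \<le> a" "a + b \<le> n" "stable_subspace n a b Z" "base_tensor a b \<in> Z"
  shows "W n a b \<subseteq> Z"
proof
  fix f :: "'a tensor" assume "f \<in> W n a b"
  then have "f = (\<lambda>x. \<Sum>P\<in>idx2 n a b. f P * unit_tensor P x)"
    by (rule W_eq_sum_unit_tensors)
  also have "\<dots> \<in> Z"
    using assms(3,4) finite_idx2 by (rule stable_subspace_sum) (auto intro: unit_tensor_in_stable_subspace[OF assms])
  finally show "f \<in> Z" .
qed

section \<open>Equivariant endomorphisms\<close>

lemma rho_in_W: "rho n a b g f \<in> W n a b"
  by (simp add: W_def rho_def)

lemma rho_zero: "rho n a b g (\<lambda>x. 0) = (\<lambda>x. 0)"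
  by (simp add: rho_eq_kernel_map kernel_map_def)

lemma kernel_map_diff_sum:
  "kernel_map I K (\<lambda>y. u y - (\<Sum>t\<in>T. c t * v t y)) =
    (\<lambda>x. kernel_map I K u x - (\<Sum>t\<in>T. c t * kernel_map I K (v t) x))"
  unfolding kernel_map_def
  by (simp add: fun_eq_iff left_diff_distrib sum_subtractf sum_distrib_left sum_distrib_right
      sum.swap[of _ T] mult.assoc mult.left_commute)

lemma HomGD:
  assumes "F \<in> HomG n a b" and "f \<in> W n a b"
  shows HomG_in_W: "F f \<in> W n a b"
    and HomG_add: "h \<in> W n a b \<Longrightarrow> F (\<lambda>x. f x + h x) = (\<lambda>x. F f x + F h x)"
    and HomG_smult: "F (\<lambda>x. c * f x) = (\<lambda>x. c * F f x)"
    and HomG_equivariant: "g \<in> GL n \<Longrightarrow> F (rho n a b g f) = rho n a b g (F f)"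
  using assms unfolding HomG_def by blast+

lemma HomG_diff_sum:
  fixes F :: "('a::comm_ring_1) tensor \<Rightarrow> 'a tensor"
  assumes F: "F \<in> HomG n a b" and G: "\<And>t. t \<in> T \<Longrightarrow> G t \<in> HomG n a b"
  shows "(\<lambda>f x. F f x - (\<Sum>t\<in>T. c t * G t f x)) \<in> HomG n a b"
proof -
  let ?F' = "\<lambda>f x. F f x - (\<Sum>t\<in>T. c t * G t f x)"
  have "?F' f \<in> W n a b" if "f \<in> W n a b" for f
    using F G that by (auto simp: HomG_def W_def)
  moreover have "?F' (\<lambda>x. f x + h x) = (\<lambda>x. ?F' f x + ?F' h x)" if "f \<in> W n a b" "h \<in> W n a b" for f h
    using F G that by (simp add: HomG_def algebra_simps sum.distrib)
  moreover have "?F' (\<lambda>x. k * f x) = (\<lambda>x. k * ?F' f x)" if "f \<in> W n a b" for k f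
    using F G that by (simp add: HomG_def algebra_simps sum_distrib_left)
  moreover have "?F' (rho n a b g f) = rho n a b g (?F' f)" if "g \<in> GL n" "f \<in> W n a b" for g f
    using F G that by (simp add: HomG_def rho_eq_kernel_map kernel_map_diff_sum cong: sum.cong)
  ultimately show ?thesis
    unfolding HomG_def by blast
qed

lemma HomG_kernel_stable:
  fixes F :: "('a::comm_ring_1) tensor \<Rightarrow> 'a tensor"
  assumes F: "F \<in> HomG n a b"
  shows "stable_subspace n a b {f \<in> W n a b. F f = (\<lambda>x. 0)}"
  unfolding stable_subspace_def
proof (intro conjI ballI allI)
  fix f h assume f: "f \<in> {f \<in> W n a b. F f = (\<lambda>x. 0)}" and h: "h \<in> {f \<in> W n a b. F f = (\<lambda>x. 0)}"
  then show "(\<lambda>x. f x + h x) \<in> {f \<in> W n a b. F f = (\<lambda>x. 0)}"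
    using HomG_add[OF F] by (auto simp: W_def)
next
  fix c f assume "f \<in> {f \<in> W n a b. F f = (\<lambda>x. 0)}"
  then show "(\<lambda>x. c * f x) \<in> {f \<in> W n a b. F f = (\<lambda>x. 0)}"
    using HomG_smult[OF F] by (auto simp: W_def)
next
  fix g :: "nat \<Rightarrow> nat \<Rightarrow> 'a" and f assume "g \<in> GL n" "f \<in> {f \<in> W n a b. F f = (\<lambda>x. 0)}"
  then show "rho n a b g f \<in> {f \<in> W n a b. F f = (\<lambda>x. 0)}"
    using HomG_equivariant[OF F] by (simp add: rho_in_W rho_zero)
qed

lemma HomG_vanishes_if_kills_base_tensor:
  assumes "b \<le> a" "a + b \<le> n" and F: "F \<in> HomG n a b" and base: "F (base_tensor a b) = (\<lambda>x. 0)"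
    and f: "f \<in> W n a b"
  shows "F f = (\<lambda>x. 0)"
proof -
  have "W n a b \<subseteq> {f \<in> W n a b. F f = (\<lambda>x. 0)}"
    using base base_tensor_in_W[OF assms(2)]
    by (intro W_subset_stable_subspace[OF assms(1,2) HomG_kernel_stable[OF F]]) auto
  then show ?thesis
    using f by blast
qed

lemma weight_two_eq:
  assumes "((if p then 2 else 1) * (if q then 2 else 1) :: 'a::field_char_0) =
      (if p' then 2 else 1) * (if q' then 2 else 1)"
    and "\<not> (p' \<and> q')"
  shows "\<not> (p \<and> q) \<and> (p \<or> q \<longleftrightarrow> p' \<or> q')"
  using assms by (cases p; cases q; cases p'; cases q') simp_all

text \<open>The diagonal matrices \<open>diag_two j\<close> act on \<open>e\<^sub>S \<otimes> e\<^sub>T\<close> by the weight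
  \<open>2\<^bsup>[j \<in> S] + [j \<in> T]\<^esup>\<close>; an equivariant map preserves weights.\<close>
lemma HomG_base_tensor_support:
  fixes F :: "('a::field_char_0) tensor \<Rightarrow> 'a tensor"
  assumes n: "a + b \<le> n" and F: "F \<in> HomG n a b" and nonzero: "F (base_tensor a b) (S, T) \<noteq> 0"
  shows "(S, T) \<in> idx2 n a b" "S \<inter> T = {}" "S \<union> T = {..<a} \<union> {a..<a + b}"
proof -
  let ?w = "base_tensor a b :: 'a tensor" and ?S0 = "{..<a}" and ?T0 = "{a..<a + b}"
  let ?weight = "\<lambda>j S T. ((if j \<in> S then 2 else 1) * (if j \<in> T then 2 else 1) :: 'a)"
  have w: "?w \<in> W n a b"
    using n by (rule base_tensor_in_W)
  with nonzero show ST: "(S, T) \<in> idx2 n a b"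
    using HomG_in_W[OF F w] unfolding W_def by blast
  have "rho n a b (diag_two j) ?w = (\<lambda>x. ?weight j ?S0 ?T0 * ?w x)" for j
    using base_index_in_idx2[OF n] by (auto simp: fun_eq_iff rho_diag_two base_tensor_def unit_tensor_def)
  then have rho_Fw: "rho n a b (diag_two j) (F ?w) = (\<lambda>x. ?weight j ?S0 ?T0 * F ?w x)" for j
    using HomG_equivariant[OF F w diag_two_in_GL] HomG_smult[OF F w] by simp
  have "?weight j S T * F ?w (S, T) = ?weight j ?S0 ?T0 * F ?w (S, T)" for j
    using fun_cong[OF rho_Fw[of j], of "(S, T)"] ST by (simp add: rho_diag_two)
  then have weights: "?weight j S T = ?weight j ?S0 ?T0" for j
    using nonzero by simp
  have "\<not> (j \<in> S \<and> j \<in> T) \<and> (j \<in> S \<or> j \<in> T \<longleftrightarrow> j \<in> ?S0 \<or> j \<in> ?T0)" for j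
    by (rule weight_two_eq[OF weights[of j]]) auto
  then show "S \<inter> T = {}" "S \<union> T = ?S0 \<union> ?T0"
    by blast+
qed

lemma HomG_base_tensor_perm_invariant:
  fixes F :: "('a::comm_ring_1) tensor \<Rightarrow> 'a tensor"
  assumes n: "a + b \<le> n" and F: "F \<in> HomG n a b" and bij: "bij_betw \<pi> {..<n} {..<n}"
    and fixed: "\<pi> ` {..<a} = {..<a}" "\<pi> ` {a..<a + b} = {a..<a + b}" and P: "P \<in> idx2 n a b"
  shows "F (base_tensor a b) (\<pi> ` fst P, \<pi> ` snd P) = 0 \<longleftrightarrow> F (base_tensor a b) P = 0"
proof -
  let ?w = "base_tensor a b :: 'a tensor"
  let ?\<sigma> = "(-1) ^ inversions \<pi> {..<a} * (-1) ^ inversions \<pi> {a..<a + b} :: 'a"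
  have w: "?w \<in> W n a b"
    using n by (rule base_tensor_in_W)
  have "rho n a b (perm_matrix \<pi>) ?w = (\<lambda>x. ?\<sigma> * ?w x)"
    using rho_perm_unit_tensor[OF bij base_index_in_idx2[OF n]] fixed by (simp add: base_tensor_def)
  then have rho_Fw: "rho n a b (perm_matrix \<pi>) (F ?w) = (\<lambda>x. ?\<sigma> * F ?w x)"
    using HomG_equivariant[OF F w perm_matrix_in_GL[OF bij]] HomG_smult[OF F w] by simp
  have "?\<sigma> * F ?w (\<pi> ` fst P, \<pi> ` snd P) =
      (-1) ^ inversions \<pi> (fst P) * (-1) ^ inversions \<pi> (snd P) * F ?w P"
    using fun_cong[OF rho_Fw, of "(\<pi> ` fst P, \<pi> ` snd P)"] rho_perm_at_image[OF bij P, of "F ?w"] by simp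
  then show ?thesis
    by (auto simp: mult.assoc minus_one_power_mult_eq_0_iff)
qed

lemma HomG_kills_base_tensor_if_kills_test_indices:
  fixes F :: "('a::field_char_0) tensor \<Rightarrow> 'a tensor"
  assumes ab: "b \<le> a" "a + b \<le> n" and F: "F \<in> HomG n a b"
    and test: "\<And>s. s \<le> b \<Longrightarrow> F (base_tensor a b) (test_index a b s) = 0"
  shows "F (base_tensor a b) = (\<lambda>x. 0)"
proof
  let ?S0 = "{..<a}" and ?T0 = "{a..<a + b}"
  fix Q
  show "F (base_tensor a b) Q = 0"
  proof (rule ccontr)
    assume nonzero: "F (base_tensor a b) Q \<noteq> 0"
    obtain S T where Q: "Q = (S, T)"
      by (cases Q)
    note support = HomG_base_tensor_support[OF ab(2) F nonzero[unfolded Q]]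
    define s where "s = card (S \<inter> ?T0)"
    have "s \<le> b"
      unfolding s_def using card_mono[of ?T0 "S \<inter> ?T0"] by auto
    have S: "S \<subseteq> ?S0 \<union> ?T0" "card S = a"
      using support by (auto simp: idx_def)
    note A = test_set_card[OF \<open>s \<le> b\<close> ab(1)]
    have sub: "?S0 \<subseteq> {..<n}" "?T0 \<subseteq> {..<n}" and disj: "?S0 \<inter> ?T0 = {}"
      using ab by auto
    have "card (test_set a s) = card S" "card (test_set a s \<inter> ?T0) = card (S \<inter> ?T0)"
      using A S by (simp_all add: s_def)
    then obtain \<pi> where bij: "bij_betw \<pi> {..<n} {..<n}" and fixed: "\<pi> ` ?S0 = ?S0" "\<pi> ` ?T0 = ?T0"
      and moved: "\<pi> ` test_set a s = S"
      by (rule exists_perm_moving_subset[OF sub disj A(1) S(1)])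
    have "\<pi> ` (?S0 \<union> ?T0 - test_set a s) = (?S0 \<union> ?T0) - S"
      using bij fixed moved test_set_card[OF \<open>s \<le> b\<close> ab(1)] ab
      by (subst inj_on_image_set_diff[of \<pi> "{..<n}"]) (auto simp: bij_betw_def image_Un)
    also have "\<dots> = T"
      using support by blast
    finally have "(\<pi> ` fst (test_index a b s), \<pi> ` snd (test_index a b s)) = Q"
      using moved by (simp add: test_index_def Q)
    then show False
      using HomG_base_tensor_perm_invariant[OF ab(2) F bij fixed test_index_in_idx2[OF ab \<open>s \<le> b\<close>]]
        test[OF \<open>s \<le> b\<close>] nonzero by simp
  qed
qed

lemma HomG_spanned_by_Phi:
  fixes F :: "('a::field_char_0) tensor \<Rightarrow> 'a tensor"
  assumes ab: "b \<le> a" "a + b \<le> n" and F: "F \<in> HomG n a b"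
  shows "\<exists>c. \<forall>f\<in>W n a b. F f = (\<lambda>x. \<Sum>t\<le>b. c t * Phi n a b t f x)"
proof -
  have "\<exists>c. \<forall>s\<le>b. (\<Sum>t\<le>b. c t * Phi n a b t (base_tensor a b) (test_index a b s)) =
      F (base_tensor a b) (test_index a b s)"
    by (rule triangular_system_solvable) (use Phi_base_tensor_test_index[OF ab] in auto)
  then obtain c where c: "\<forall>s\<le>b. (\<Sum>t\<le>b. c t * Phi n a b t (base_tensor a b) (test_index a b s)) =
      F (base_tensor a b) (test_index a b s)"
    by blast
  let ?F' = "\<lambda>f x. F f x - (\<Sum>t\<le>b. c t * Phi n a b t f x)"
  have F': "?F' \<in> HomG n a b"
    using F by (rule HomG_diff_sum) (rule Phi_in_HomG, simp)
  have "?F' (base_tensor a b) = (\<lambda>x. 0)"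
    using c by (intro HomG_kills_base_tensor_if_kills_test_indices[OF ab F']) simp
  then have "?F' f = (\<lambda>x. 0)" if "f \<in> W n a b" for f
    using HomG_vanishes_if_kills_base_tensor[OF ab F'] that by blast
  then show ?thesis
    by (auto simp: fun_eq_iff)
qed

theorem corollary3p3:
  fixes a b n :: nat
  assumes "b \<le> a" and "a + b \<le> n"
  shows "(\<forall>t\<le>b. (Phi n a b t :: ('a::field_char_0) tensor \<Rightarrow> 'a tensor) \<in> HomG n a b)
    \<and> (\<forall>c :: nat \<Rightarrow> 'a. (\<forall>f\<in>W n a b. (\<lambda>x. \<Sum>t\<le>b. c t * Phi n a b t f x) = (\<lambda>x. 0))
          \<longrightarrow> (\<forall>t\<le>b. c t = 0))
    \<and> (\<forall>F\<in>HomG n a b. \<exists>c :: nat \<Rightarrow> 'a.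
          \<forall>f\<in>W n a b. F f = (\<lambda>x. \<Sum>t\<le>b. c t * Phi n a b t f x))"
  using Phi_in_HomG Phi_linearly_independent[OF assms] HomG_spanned_by_Phi[OF assms] by auto

end
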